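(* Let $G$ be a finite GVZ-group with $|\mathrm{cd}(G)|=2$. Then $G$ has nilpotency class $2$.
   Context: All groups are finite. $\mathrm{Irr}(G)$ is the set of complex irreducible characters of $G$ and $\mathrm{cd}(G)=\{\chi(1):\chi\in\mathrm{Irr}(G)\}$. For a character $\chi$, $Z(\chi)=\{g\in G: |\chi(g)|=\chi(1)\}$. A nonabelian group $G$ is a GVZ-group if for every $\chi\in\mathrm{Irr}(G)$ we have $\chi(g)=0$ for all $g\in G\setminus Z(\chi)$. *)

theory Defs
  imports "HOL-Algebra.Algebra" "Jordan_Normal_Form.Matrix"
begin

definition mat_trace :: "complex mat \<Rightarrow> complex" where
  "mat_trace A = (\<Sum>i<dim_row A. A $$ (i, i))"

definition is_rep :: "('a, 'b) monoid_scheme \<Rightarrow> nat \<Rightarrow> ('a \<Rightarrow> complex mat) \<Rightarrow> bool" where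
  "is_rep G n \<rho> \<longleftrightarrow> n \<ge> 1 \<and>
     (\<forall>g \<in> carrier G. \<rho> g \<in> carrier_mat n n) \<and>
     \<rho> \<one>\<^bsub>G\<^esub> = 1\<^sub>m n \<and>
     (\<forall>g \<in> carrier G. \<forall>h \<in> carrier G. \<rho> (g \<otimes>\<^bsub>G\<^esub> h) = \<rho> g * \<rho> h)"

definition invariant_subspace :: "('a, 'b) monoid_scheme \<Rightarrow> nat \<Rightarrow> ('a \<Rightarrow> complex mat) \<Rightarrow> complex vec set \<Rightarrow> bool" where
  "invariant_subspace G n \<rho> W \<longleftrightarrow> W \<subseteq> carrier_vec n \<and> 0\<^sub>v n \<in> W \<and>
     (\<forall>v \<in> W. \<forall>w \<in> W. v + w \<in> W) \<and>
     (\<forall>c. \<forall>v \<in> W. c \<cdot>\<^sub>v v \<in> W) \<and>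
     (\<forall>g \<in> carrier G. \<forall>v \<in> W. \<rho> g *\<^sub>v v \<in> W)"

definition irreducible_rep :: "('a, 'b) monoid_scheme \<Rightarrow> nat \<Rightarrow> ('a \<Rightarrow> complex mat) \<Rightarrow> bool" where
  "irreducible_rep G n \<rho> \<longleftrightarrow> is_rep G n \<rho> \<and>
     (\<forall>W. invariant_subspace G n \<rho> W \<longrightarrow> W = {0\<^sub>v n} \<or> W = carrier_vec n)"

definition character :: "('a, 'b) monoid_scheme \<Rightarrow> ('a \<Rightarrow> complex mat) \<Rightarrow> 'a \<Rightarrow> complex" where
  "character G \<rho> = (\<lambda>g. if g \<in> carrier G then mat_trace (\<rho> g) else 0)"

definition Irr :: "('a, 'b) monoid_scheme \<Rightarrow> ('a \<Rightarrow> complex) set" where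
  "Irr G = {character G \<rho> | \<rho> n. irreducible_rep G n \<rho>}"

definition cd :: "('a, 'b) monoid_scheme \<Rightarrow> complex set" where
  "cd G = {\<chi> \<one>\<^bsub>G\<^esub> | \<chi>. \<chi> \<in> Irr G}"

definition char_center :: "('a, 'b) monoid_scheme \<Rightarrow> ('a \<Rightarrow> complex) \<Rightarrow> 'a set" where
  "char_center G \<chi> = {g \<in> carrier G. complex_of_real (cmod (\<chi> g)) = \<chi> \<one>\<^bsub>G\<^esub>}"

definition GVZ_group :: "('a, 'b) monoid_scheme \<Rightarrow> bool" where
  "GVZ_group G \<longleftrightarrow> \<not> comm_group G \<and>
     (\<forall>\<chi> \<in> Irr G. \<forall>g \<in> carrier G - char_center G \<chi>. \<chi> g = 0)"

definition group_center :: "('a, 'b) monoid_scheme \<Rightarrow> 'a set" where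
  "group_center G = {z \<in> carrier G. \<forall>g \<in> carrier G. z \<otimes>\<^bsub>G\<^esub> g = g \<otimes>\<^bsub>G\<^esub> z}"

definition nilpotency_class_2 :: "('a, 'b) monoid_scheme \<Rightarrow> bool" where
  "nilpotency_class_2 G \<longleftrightarrow> \<not> comm_group G \<and> derived G (carrier G) \<subseteq> group_center G"

end

(*
  Realise Irr(G) by unitary irreducible representations, obtained by splitting the regular
  representations of the quotients G/N into orthogonal invariant pieces. For unitary \<rho> one has
  |\<chi>(g)| = \<chi>(1) iff \<rho>(g) is scalar, so Z(\<chi>) is the normal subgroup of elements acting as
  scalars, and the GVZ property turns the orthogonality relation into |G| = \<chi>(1)^2 |Z(\<chi>)|.

  Let cd(G) = {1, n}. If a commutator c were outside Z(\<chi>) for a nonlinear \<chi>, take an irreducible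
  \<sigma> trivial on Z(\<chi>) with \<sigma>(c) \<noteq> 1. Then \<sigma> is nonlinear, so of degree n, and
  |Z(\<sigma>)| = |Z(\<chi>)| with Z(\<chi>) \<subseteq> Z(\<sigma>) gives Z(\<sigma>) = Z(\<chi>). Hence \<sigma> has nonzero trace sum
  over G, which forces \<sigma> to be trivial. So nonlinear representations send commutators to
  scalars and linear ones kill them; as irreducible representations separate the points of G,
  every commutator is central.
*)
theory Submission
  imports Defs "Jordan_Normal_Form.Spectral_Radius"
begin

section \<open>Adjoints, traces and unitary matrices\<close>

lemma mat_adjoint_dim [simp]:
  "dim_row (mat_adjoint A) = dim_col A" "dim_col (mat_adjoint A) = dim_row A"
  unfolding mat_adjoint_def by auto

lemma carrier_mat_adjoint [simp, intro]: "A \<in> carrier_mat n m \<Longrightarrow> mat_adjoint A \<in> carrier_mat m n"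
  by (metis carrier_matD carrier_matI mat_adjoint_dim)

lemma index_mat_adjoint [simp]:
  fixes A :: "complex mat"
  shows "i < dim_col A \<Longrightarrow> j < dim_row A \<Longrightarrow> mat_adjoint A $$ (i, j) = cnj (A $$ (j, i))"
  by (simp add: mat_adjoint_def mat_of_rows_index)

lemma mat_adjoint_adjoint [simp]: "mat_adjoint (mat_adjoint (A :: complex mat)) = A"
  by (rule eq_matI) auto

lemma mat_adjoint_mult:
  fixes A B :: "complex mat"
  assumes "dim_col A = dim_row B"
  shows "mat_adjoint (A * B) = mat_adjoint B * mat_adjoint A"
  using assms by (intro eq_matI) (auto simp: scalar_prod_def mult.commute)

lemma mat_adjoint_one [simp]: "mat_adjoint (1\<^sub>m n :: complex mat) = 1\<^sub>m n"
  by (rule eq_matI) auto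

lemma mat_adjoint_zero [simp]: "mat_adjoint (0\<^sub>m n m :: complex mat) = 0\<^sub>m m n"
  by (rule eq_matI) auto

lemma mat_adjoint_smult [simp]: "mat_adjoint (c \<cdot>\<^sub>m A :: complex mat) = cnj c \<cdot>\<^sub>m mat_adjoint A"
  by (rule eq_matI) auto

lemma index_mult_mat_sum:
  assumes "A \<in> carrier_mat n m" "B \<in> carrier_mat m p" "i < n" "k < p"
  shows "(A * B) $$ (i, k) = (\<Sum>a<m. A $$ (i, a) * B $$ (a, k))"
  using assms by (simp add: scalar_prod_def atLeast0LessThan)

lemma mat_trace_mult_comm:
  assumes "A \<in> carrier_mat n m" "B \<in> carrier_mat m n"
  shows "mat_trace (A * B) = mat_trace (B * A)"
proof -
  have "mat_trace (A * B) = (\<Sum>i<n. \<Sum>k<m. A $$ (i, k) * B $$ (k, i))"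
    using assms by (simp add: mat_trace_def scalar_prod_def atLeast0LessThan)
  also have "\<dots> = (\<Sum>k<m. \<Sum>i<n. B $$ (k, i) * A $$ (i, k))"
    by (subst sum.swap) (simp add: mult.commute)
  also have "\<dots> = mat_trace (B * A)"
    using assms by (simp add: mat_trace_def scalar_prod_def atLeast0LessThan)
  finally show ?thesis .
qed

lemma mat_trace_one [simp]: "mat_trace (1\<^sub>m n) = of_nat n"
  by (simp add: mat_trace_def)

lemma mat_trace_smult: "A \<in> carrier_mat n n \<Longrightarrow> mat_trace (c \<cdot>\<^sub>m A) = c * mat_trace A"
  by (simp add: mat_trace_def sum_distrib_left)

lemma mat_trace_adjoint: "A \<in> carrier_mat n n \<Longrightarrow> mat_trace (mat_adjoint A) = cnj (mat_trace A)"
  by (simp add: mat_trace_def)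

definition unitary :: "nat \<Rightarrow> complex mat \<Rightarrow> bool" where
  "unitary n U \<longleftrightarrow> U \<in> carrier_mat n n \<and> mat_adjoint U * U = 1\<^sub>m n"

lemma unitary_column_norm:
  assumes U: "unitary n U" and j: "j < n"
  shows "(\<Sum>k<n. (cmod (U $$ (k, j)))\<^sup>2) = 1"
proof -
  have c: "U \<in> carrier_mat n n" and e: "mat_adjoint U * U = 1\<^sub>m n"
    using U by (auto simp: unitary_def)
  have "(mat_adjoint U * U) $$ (j, j) = (\<Sum>k<n. cnj (U $$ (k, j)) * U $$ (k, j))"
    using c j by (simp add: scalar_prod_def atLeast0LessThan)
  also have "\<dots> = (\<Sum>k<n. complex_of_real ((cmod (U $$ (k, j)))\<^sup>2))"
    by (intro sum.cong refl) (metis complex_norm_square mult.commute)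
  finally have "complex_of_real (\<Sum>k<n. (cmod (U $$ (k, j)))\<^sup>2) = 1"
    using e j by simp
  then show ?thesis by (metis of_real_eq_1_iff)
qed

lemma sum_attains_bound_imp_eq:
  fixes f :: "'a \<Rightarrow> real"
  assumes "finite A" "\<And>j. j \<in> A \<Longrightarrow> f j \<le> c" "real (card A) * c \<le> sum f A" "j \<in> A"
  shows "f j = c"
proof -
  have "(\<Sum>i\<in>A. c - f i) \<le> 0" using assms(3) by (simp add: sum_subtractf)
  then have "\<forall>i\<in>A. c - f i = 0"
    using assms(1,2) sum_nonneg_eq_0_iff[of A "\<lambda>i. c - f i"]
    by (metis (no_types, lifting) antisym diff_ge_0_iff_ge sum_nonneg)
  with assms(4) show ?thesis by simp
qed

text \<open>Equality case of the triangle inequality for unit complex numbers: with \<open>s = \<Sum> z\<close> one has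
  \<open>Re (z j * cnj s) \<le> n\<close> for each summand while these real parts add up to \<open>\<bar>s\<bar>\<^sup>2 = n\<^sup>2\<close>.\<close>
lemma unit_sum_norm_eq_card_imp_eq:
  fixes z :: "'a \<Rightarrow> complex"
  assumes fin: "finite A" and unit: "\<And>j. j \<in> A \<Longrightarrow> cmod (z j) = 1"
    and norm: "cmod (sum z A) = real (card A)" and j: "j \<in> A"
  shows "z j = sum z A / of_nat (card A)"
proof -
  define s where "s = sum z A"
  define n where "n = card A"
  have n: "n > 0" using fin j by (auto simp: n_def card_gt_0_iff)
  have ss: "s * cnj s = of_nat (n * n)"
    using norm unfolding s_def n_def
    by (metis complex_norm_square of_nat_mult of_real_of_nat_eq power2_eq_square)
  have le: "Re (z i * cnj s) \<le> real n" if "i \<in> A" for i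
  proof -
    have "Re (z i * cnj s) \<le> cmod (z i * cnj s)" by (rule complex_Re_le_cmod)
    also have "\<dots> = real n" using unit[OF that] norm
      by (simp only: norm_mult complex_mod_cnj) (simp add: s_def n_def)
    finally show ?thesis .
  qed
  have "(\<Sum>i\<in>A. Re (z i * cnj s)) = Re (s * cnj s)"
    by (simp add: s_def sum_distrib_right Re_sum)
  also have "\<dots> = real (card A) * real n" using ss by (simp add: n_def)
  finally have "real (card A) * real n \<le> (\<Sum>i\<in>A. Re (z i * cnj s))" by simp
  then have "Re (z j * cnj s) = real n"
    using sum_attains_bound_imp_eq[of A "\<lambda>i. Re (z i * cnj s)" "real n" j, OF fin le] j by simp
  moreover have "cmod (z j * cnj s) = real n"
    using unit[OF j] norm by (simp only: norm_mult complex_mod_cnj) (simp add: s_def n_def)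
  ultimately have zs: "z j * cnj s = of_nat n"
    by (metis Im_eq_0 abs_norm_cancel complex_is_Real_iff of_real_Re of_real_of_nat_eq)
  have "z j * of_nat n * of_nat n = s * of_nat n"
  proof -
    have "z j * of_nat n * of_nat n = z j * (s * cnj s)" using ss by (simp add: mult.assoc)
    also have "\<dots> = s * (z j * cnj s)" by (rule mult.left_commute)
    finally show ?thesis by (simp only: zs)
  qed
  then have "z j * of_nat n = s" using n by simp
  with n show ?thesis by (simp add: s_def n_def eq_divide_eq)
qed

lemma unitary_eq_scalar_if_trace_norm:
  assumes U: "unitary n U" and n: "0 < n" and tr: "cmod (mat_trace U) = real n"
  shows "U = (mat_trace U / of_nat n) \<cdot>\<^sub>m 1\<^sub>m n"
proof -
  have c: "U \<in> carrier_mat n n" using U by (simp add: unitary_def)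
  have trace: "mat_trace U = (\<Sum>j<n. U $$ (j, j))" using c by (simp add: mat_trace_def)
  have col: "(\<Sum>k<n. (cmod (U $$ (k, j)))\<^sup>2) = 1" if "j < n" for j
    using unitary_column_norm[OF U that] .
  have le1: "cmod (U $$ (j, j)) \<le> 1" if j: "j < n" for j
  proof -
    have "(cmod (U $$ (j, j)))\<^sup>2 \<le> (\<Sum>k<n. (cmod (U $$ (k, j)))\<^sup>2)"
      by (rule member_le_sum) (use j in auto)
    then show ?thesis using col[OF j] by (simp add: power_le_one_iff abs_le_iff)
  qed
  have "real (card {..<n}) * 1 \<le> (\<Sum>j<n. cmod (U $$ (j, j)))"
    using tr norm_sum[of "\<lambda>j. U $$ (j, j)" "{..<n}"] by (simp add: trace)
  then have diag_norm: "cmod (U $$ (j, j)) = 1" if "j < n" for j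
    using sum_attains_bound_imp_eq[of "{..<n}" "\<lambda>j. cmod (U $$ (j, j))" 1 j] le1 that by simp
  have off_diag: "U $$ (k, j) = 0" if j: "j < n" and k: "k < n" and kj: "k \<noteq> j" for j k
  proof -
    have "(\<Sum>k<n. (cmod (U $$ (k, j)))\<^sup>2)
        = (cmod (U $$ (j, j)))\<^sup>2 + (\<Sum>k\<in>{..<n} - {j}. (cmod (U $$ (k, j)))\<^sup>2)"
      by (rule sum.remove) (use j in auto)
    then have "(\<Sum>k\<in>{..<n} - {j}. (cmod (U $$ (k, j)))\<^sup>2) = 0"
      using col[OF j] diag_norm[OF j] by simp
    then show ?thesis using k kj by (simp add: sum_nonneg_eq_0_iff)
  qed
  have diag: "U $$ (j, j) = mat_trace U / of_nat n" if "j < n" for j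
    using unit_sum_norm_eq_card_imp_eq[of "{..<n}" "\<lambda>j. U $$ (j, j)" j] diag_norm tr that
    by (simp add: trace)
  show ?thesis
    by (rule eq_matI) (use c diag off_diag in auto)
qed

lemma unitary_scalar_iff_trace_norm:
  assumes U: "unitary n U" and n: "0 < n"
  shows "(\<exists>\<mu>. U = \<mu> \<cdot>\<^sub>m 1\<^sub>m n) \<longleftrightarrow> cmod (mat_trace U) = real n"
proof
  assume "\<exists>\<mu>. U = \<mu> \<cdot>\<^sub>m 1\<^sub>m n"
  then obtain \<mu> where \<mu>: "U = \<mu> \<cdot>\<^sub>m 1\<^sub>m n" ..
  have "(\<Sum>k<n. (cmod (U $$ (k, 0)))\<^sup>2) = 1" by (rule unitary_column_norm[OF U n])
  also have "(\<Sum>k<n. (cmod (U $$ (k, 0)))\<^sup>2) = (\<Sum>k<n. if k = 0 then (cmod \<mu>)\<^sup>2 else 0)"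
    using n by (intro sum.cong) (auto simp: \<mu>)
  finally have "(cmod \<mu>)\<^sup>2 = 1" using n by simp
  then have "cmod \<mu> = 1" using norm_ge_zero[of \<mu>] by (simp add: power2_eq_1_iff)
  then show "cmod (mat_trace U) = real n"
    by (simp add: \<mu> mat_trace_smult[of "1\<^sub>m n" n] norm_mult)
qed (use unitary_eq_scalar_if_trace_norm[OF U n] in blast)

section \<open>Unitary representations and Schur's lemma\<close>

definition unitary_rep :: "('a, 'b) monoid_scheme \<Rightarrow> nat \<Rightarrow> ('a \<Rightarrow> complex mat) \<Rightarrow> bool" where
  "unitary_rep G n \<rho> \<longleftrightarrow> is_rep G n \<rho> \<and> (\<forall>g \<in> carrier G. unitary n (\<rho> g))"

lemma rep_carrier: "is_rep G n \<rho> \<Longrightarrow> g \<in> carrier G \<Longrightarrow> \<rho> g \<in> carrier_mat n n"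
  by (simp add: is_rep_def)

lemma rep_mult: "is_rep G n \<rho> \<Longrightarrow> g \<in> carrier G \<Longrightarrow> h \<in> carrier G \<Longrightarrow> \<rho> (g \<otimes>\<^bsub>G\<^esub> h) = \<rho> g * \<rho> h"
  by (simp add: is_rep_def)

lemma rep_one: "is_rep G n \<rho> \<Longrightarrow> \<rho> \<one>\<^bsub>G\<^esub> = 1\<^sub>m n"
  by (simp add: is_rep_def)

lemma index_rep_mult:
  assumes "is_rep G n \<rho>" "g \<in> carrier G" "h \<in> carrier G" "i < n" "k < n"
  shows "\<rho> (g \<otimes>\<^bsub>G\<^esub> h) $$ (i, k) = (\<Sum>a<n. \<rho> g $$ (i, a) * \<rho> h $$ (a, k))"
  using rep_mult[OF assms(1-3)] index_mult_mat_sum[OF rep_carrier[OF assms(1,2)] rep_carrier[OF assms(1,3)] assms(4,5)]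
  by simp

lemma rep_dim:
  "is_rep G n \<rho> \<Longrightarrow> g \<in> carrier G \<Longrightarrow> dim_row (\<rho> g) = n"
  "is_rep G n \<rho> \<Longrightarrow> g \<in> carrier G \<Longrightarrow> dim_col (\<rho> g) = n"
  using rep_carrier by (metis carrier_matD)+

lemma schur_lemma:
  assumes irr: "irreducible_rep G n \<rho>" and T: "T \<in> carrier_mat n n"
    and comm: "\<And>g. g \<in> carrier G \<Longrightarrow> T * \<rho> g = \<rho> g * T"
  shows "\<exists>c. T = c \<cdot>\<^sub>m 1\<^sub>m n"
proof -
  have rep: "is_rep G n \<rho>" using irr by (simp add: irreducible_rep_def)
  hence n: "n > 0" by (simp add: is_rep_def)
  obtain lam where "eigenvalue T lam" using spectrum_non_empty[OF T n] unfolding spectrum_def by auto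
  then obtain v where v: "v \<in> carrier_vec n" "v \<noteq> 0\<^sub>v n" "T *\<^sub>v v = lam \<cdot>\<^sub>v v"
    using T unfolding eigenvalue_def eigenvector_def by auto
  define W where "W = {u \<in> carrier_vec n. T *\<^sub>v u = lam \<cdot>\<^sub>v u}"
  have inv: "invariant_subspace G n \<rho> W"
    unfolding invariant_subspace_def
  proof (intro conjI ballI allI)
    show "W \<subseteq> carrier_vec n" by (auto simp: W_def)
    show "0\<^sub>v n \<in> W" using T by (auto simp: W_def)
    fix u w assume u: "u \<in> W" and w: "w \<in> W"
    show "u + w \<in> W" using u w T
      by (auto simp: W_def mult_add_distrib_mat_vec[OF T] smult_add_distrib_vec)
  next
    fix c u assume u: "u \<in> W"
    show "c \<cdot>\<^sub>v u \<in> W" using u T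
      by (auto simp: W_def mult_mat_vec[OF T] smult_smult_assoc mult.commute)
  next
    fix g u assume g: "g \<in> carrier G" and u: "u \<in> W"
    have rg: "\<rho> g \<in> carrier_mat n n" using rep g by (simp add: rep_carrier)
    have uc: "u \<in> carrier_vec n" and tu: "T *\<^sub>v u = lam \<cdot>\<^sub>v u" using u by (auto simp: W_def)
    have "T *\<^sub>v (\<rho> g *\<^sub>v u) = (T * \<rho> g) *\<^sub>v u" using T rg uc by simp
    also have "\<dots> = (\<rho> g * T) *\<^sub>v u" using comm[OF g] by simp
    also have "\<dots> = \<rho> g *\<^sub>v (lam \<cdot>\<^sub>v u)" using T rg uc tu by simp
    also have "\<dots> = lam \<cdot>\<^sub>v (\<rho> g *\<^sub>v u)" using mult_mat_vec[OF rg uc] .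
    finally show "\<rho> g *\<^sub>v u \<in> W" using rg uc by (auto simp: W_def)
  qed
  have "v \<in> W" using v by (auto simp: W_def)
  hence "W \<noteq> {0\<^sub>v n}" using v by auto
  hence Wall: "W = carrier_vec n" using irr inv by (auto simp: irreducible_rep_def)
  have "T = lam \<cdot>\<^sub>m 1\<^sub>m n"
  proof (rule eq_matI)
    fix i k assume i: "i < dim_row (lam \<cdot>\<^sub>m 1\<^sub>m n)" and k: "k < dim_col (lam \<cdot>\<^sub>m 1\<^sub>m n)"
    have "unit_vec n k \<in> W" using Wall k by auto
    hence "T *\<^sub>v unit_vec n k = lam \<cdot>\<^sub>v unit_vec n k" by (auto simp: W_def)
    hence "(T *\<^sub>v unit_vec n k) $ i = (lam \<cdot>\<^sub>v unit_vec n k) $ i" by simp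
    thus "T $$ (i,k) = (lam \<cdot>\<^sub>m 1\<^sub>m n) $$ (i,k)" using i k T by (auto simp: row_def)
  qed (use T in auto)
  thus ?thesis by blast
qed

context group
begin

lemma rep_inv_right: "is_rep G n \<rho> \<Longrightarrow> g \<in> carrier G \<Longrightarrow> \<rho> g * \<rho> (inv g) = 1\<^sub>m n"
  by (metis inv_closed r_inv rep_mult rep_one)

lemma rep_commutator_eq_one:
  assumes rep: "is_rep G n \<rho>" and x: "x \<in> carrier G" and y: "y \<in> carrier G"
    and comm: "\<rho> x * \<rho> y = \<rho> y * \<rho> x"
  shows "\<rho> (x \<otimes> y \<otimes> inv (y \<otimes> x)) = 1\<^sub>m n"
proof -
  have "\<rho> (x \<otimes> y \<otimes> inv (y \<otimes> x)) = \<rho> x * \<rho> y * \<rho> (inv (y \<otimes> x))"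
    using rep x y by (simp add: rep_mult)
  also have "\<dots> = \<rho> (y \<otimes> x) * \<rho> (inv (y \<otimes> x))"
    using rep x y by (simp only: comm rep_mult)
  also have "\<dots> = 1\<^sub>m n" using rep x y by (simp add: rep_inv_right)
  finally show ?thesis .
qed

lemma unitary_rep_adjoint:
  assumes U: "unitary_rep G n \<rho>" and g: "g \<in> carrier G"
  shows "mat_adjoint (\<rho> g) = \<rho> (inv g)"
proof -
  have rep: "is_rep G n \<rho>" and u: "unitary n (\<rho> g)" using U g by (auto simp: unitary_rep_def)
  have c: "\<rho> g \<in> carrier_mat n n" "\<rho> (inv g) \<in> carrier_mat n n"
    using rep g by (auto intro: rep_carrier)
  have "mat_adjoint (\<rho> g) = mat_adjoint (\<rho> g) * (\<rho> g * \<rho> (inv g))"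
    using rep_inv_right[OF rep g] c by simp
  also have "\<dots> = (mat_adjoint (\<rho> g) * \<rho> g) * \<rho> (inv g)"
    using c by (simp add: assoc_mult_mat[of _ n n _ n _ n])
  also have "\<dots> = \<rho> (inv g)" using u c unfolding unitary_def by simp
  finally show ?thesis .
qed

lemma unitary_rep_trace_inv:
  assumes "unitary_rep G n \<rho>" "g \<in> carrier G"
  shows "mat_trace (\<rho> (inv g)) = cnj (mat_trace (\<rho> g))"
  using unitary_rep_adjoint[OF assms] mat_trace_adjoint[of "\<rho> g" n] assms
  by (auto simp: unitary_rep_def rep_carrier)

lemma sum_carrier_reindex_left:
  "h \<in> carrier G \<Longrightarrow> (\<Sum>g\<in>carrier G. f (h \<otimes> g)) = (\<Sum>g\<in>carrier G. f g)"
  by (rule sum.reindex_bij_betw, rule bij_betw_byWitness[where f'="\<lambda>g. inv h \<otimes> g"])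
    (auto simp: m_assoc[symmetric])

lemma sum_carrier_reindex_right:
  "h \<in> carrier G \<Longrightarrow> (\<Sum>g\<in>carrier G. f (g \<otimes> h)) = (\<Sum>g\<in>carrier G. f g)"
  by (rule sum.reindex_bij_betw, rule bij_betw_byWitness[where f'="\<lambda>g. g \<otimes> inv h"])
    (auto simp: m_assoc)

end

section \<open>Orthogonality relations\<close>

text \<open>The matrix \<open>\<Sum>\<^sub>g \<rho>(g) E\<^sub>j\<^sub>l \<rho>(g\<^sup>-\<^sup>1)\<close>, where \<open>E\<^sub>j\<^sub>l\<close> is the matrix unit.\<close>
definition schur_average :: "('a, 'b) monoid_scheme \<Rightarrow> nat \<Rightarrow> ('a \<Rightarrow> complex mat) \<Rightarrow> nat \<Rightarrow> nat \<Rightarrow> complex mat" where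
  "schur_average G n \<rho> j l = mat n n (\<lambda>(a, b). \<Sum>g\<in>carrier G. \<rho> g $$ (a, j) * \<rho> (inv\<^bsub>G\<^esub> g) $$ (l, b))"

context group
begin

lemma schur_average_commute:
  assumes rep: "is_rep G n \<rho>" and j: "j < n" and l: "l < n" and h: "h \<in> carrier G"
  shows "schur_average G n \<rho> j l * \<rho> h = \<rho> h * schur_average G n \<rho> j l"
proof (rule eq_matI)
  define T where "T = schur_average G n \<rho> j l"
  have T: "T \<in> carrier_mat n n" by (simp add: T_def schur_average_def)
  have rh: "\<rho> h \<in> carrier_mat n n" using rep h by (rule rep_carrier)
  fix a b assume "a < dim_row (\<rho> h * schur_average G n \<rho> j l)" "b < dim_col (\<rho> h * schur_average G n \<rho> j l)"
  then have a: "a < n" and b: "b < n" using rh T by (auto simp: T_def)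
  have "(T * \<rho> h) $$ (a,b) = (\<Sum>c<n. T $$ (a,c) * \<rho> h $$ (c,b))"
    by (rule index_mult_mat_sum[OF T rh a b])
  also have "\<dots> = (\<Sum>c<n. (\<Sum>g\<in>carrier G. \<rho> g $$ (a,j) * \<rho> (inv g) $$ (l,c)) * \<rho> h $$ (c,b))"
    using a by (simp add: T_def schur_average_def)
  also have "\<dots> = (\<Sum>g\<in>carrier G. \<rho> g $$ (a,j) * (\<Sum>c<n. \<rho> (inv g) $$ (l,c) * \<rho> h $$ (c,b)))"
    by (simp add: sum_distrib_left sum_distrib_right mult.assoc sum.swap[of _ "{..<n}"])
  also have "\<dots> = (\<Sum>g\<in>carrier G. \<rho> g $$ (a,j) * \<rho> (inv g \<otimes> h) $$ (l,b))"
    by (rule sum.cong, simp, subst index_rep_mult[OF rep _ h l b], auto)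
  also have "\<dots> = (\<Sum>g\<in>carrier G. \<rho> (h \<otimes> g) $$ (a,j) * \<rho> (inv (h \<otimes> g) \<otimes> h) $$ (l,b))"
    by (rule sum_carrier_reindex_left[OF h, symmetric])
  also have "\<dots> = (\<Sum>g\<in>carrier G. \<rho> (h \<otimes> g) $$ (a,j) * \<rho> (inv g) $$ (l,b))"
    by (rule sum.cong, simp, use h in \<open>simp add: inv_mult_group m_assoc\<close>)
  also have "\<dots> = (\<Sum>g\<in>carrier G. (\<Sum>c<n. \<rho> h $$ (a,c) * \<rho> g $$ (c,j)) * \<rho> (inv g) $$ (l,b))"
    by (rule sum.cong, simp, subst index_rep_mult[OF rep h _ a j], auto)
  also have "\<dots> = (\<Sum>c<n. \<rho> h $$ (a,c) * (\<Sum>g\<in>carrier G. \<rho> g $$ (c,j) * \<rho> (inv g) $$ (l,b)))"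
    by (simp add: sum_distrib_left sum_distrib_right mult.assoc sum.swap[of _ "{..<n}"])
  also have "\<dots> = (\<Sum>c<n. \<rho> h $$ (a,c) * T $$ (c,b))"
    using b by (simp add: T_def schur_average_def)
  also have "\<dots> = (\<rho> h * T) $$ (a,b)"
    by (rule index_mult_mat_sum[OF rh T a b, symmetric])
  finally show "(schur_average G n \<rho> j l * \<rho> h) $$ (a,b) = (\<rho> h * schur_average G n \<rho> j l) $$ (a,b)"
    by (simp add: T_def)
qed (use rep h in \<open>auto simp: schur_average_def rep_dim\<close>)

lemma irreducible_rep_orthogonality:
  assumes irr: "irreducible_rep G n \<rho>"
    and i: "i < n" and j: "j < n" and l: "l < n" and k: "k < n"
  shows "(\<Sum>g\<in>carrier G. \<rho> g $$ (i,j) * \<rho> (inv g) $$ (l,k))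
     = (if i = k \<and> j = l then of_nat (card (carrier G)) / of_nat n else 0)"
proof -
  have rep: "is_rep G n \<rho>" using irr by (simp add: irreducible_rep_def)
  then have n: "n > 0" by (simp add: is_rep_def)
  define T where "T = schur_average G n \<rho> j l"
  have T: "T \<in> carrier_mat n n" by (simp add: T_def schur_average_def)
  obtain c where Tc: "T = c \<cdot>\<^sub>m 1\<^sub>m n"
    using schur_lemma[OF irr T] schur_average_commute[OF rep j l] by (auto simp: T_def)
  have "of_nat n * c = mat_trace T" using Tc by (simp add: mat_trace_def)
  also have "\<dots> = (\<Sum>a<n. \<Sum>g\<in>carrier G. \<rho> g $$ (a,j) * \<rho> (inv g) $$ (l,a))"
    by (simp add: mat_trace_def T_def schur_average_def)
  also have "\<dots> = (\<Sum>g\<in>carrier G. \<Sum>a<n. \<rho> (inv g) $$ (l,a) * \<rho> g $$ (a,j))"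
    by (subst sum.swap, simp add: mult.commute)
  also have "\<dots> = (\<Sum>g\<in>carrier G. \<rho> (inv g \<otimes> g) $$ (l,j))"
    by (rule sum.cong, simp, subst index_rep_mult[OF rep _ _ l j], auto)
  also have "\<dots> = of_nat (card (carrier G)) * (if l = j then 1 else 0)"
    using l j by (simp add: rep_one[OF rep])
  finally have cval: "c = (if l = j then of_nat (card (carrier G)) / of_nat n else 0)"
    using n by (auto simp: field_simps)
  have "(\<Sum>g\<in>carrier G. \<rho> g $$ (i,j) * \<rho> (inv g) $$ (l,k)) = T $$ (i,k)"
    using i k by (simp add: T_def schur_average_def)
  also have "\<dots> = (if i = k then c else 0)" using Tc i k by simp
  finally show ?thesis using cval by auto
qed

lemma irreducible_character_norm:
  assumes irr: "irreducible_rep G n \<rho>"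
  shows "(\<Sum>g\<in>carrier G. mat_trace (\<rho> g) * mat_trace (\<rho> (inv g))) = of_nat (card (carrier G))"
proof -
  have rep: "is_rep G n \<rho>" using irr by (simp add: irreducible_rep_def)
  hence n: "n > 0" by (simp add: is_rep_def)
  have "(\<Sum>g\<in>carrier G. mat_trace (\<rho> g) * mat_trace (\<rho> (inv g)))
     = (\<Sum>g\<in>carrier G. (\<Sum>i<n. \<rho> g $$ (i,i)) * (\<Sum>l<n. \<rho> (inv g) $$ (l,l)))"
    by (rule sum.cong, simp, simp add: mat_trace_def rep_dim[OF rep])
  also have "\<dots> = (\<Sum>i<n. \<Sum>l<n. \<Sum>g\<in>carrier G. \<rho> g $$ (i,i) * \<rho> (inv g) $$ (l,l))"
    by (simp add: sum_product sum.swap[of _ "carrier G"])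
  also have "\<dots> = (\<Sum>i<n. \<Sum>l<n. (if i = l then of_nat (card (carrier G)) / of_nat n else 0))"
    by (rule sum.cong, simp, rule sum.cong, simp, subst irreducible_rep_orthogonality[OF irr], auto)
  also have "\<dots> = (\<Sum>i<n. of_nat (card (carrier G)) / of_nat n)"
    by simp
  also have "\<dots> = of_nat (card (carrier G))" using n by simp
  finally show ?thesis .
qed

end

definition rep_sum :: "('a, 'b) monoid_scheme \<Rightarrow> nat \<Rightarrow> ('a \<Rightarrow> complex mat) \<Rightarrow> complex mat" where
  "rep_sum G n \<sigma> = mat n n (\<lambda>(a, b). \<Sum>g\<in>carrier G. \<sigma> g $$ (a, b))"

lemma rep_sum_carrier: "rep_sum G n \<sigma> \<in> carrier_mat n n"
  by (simp add: rep_sum_def)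

lemma mat_trace_rep_sum:
  "is_rep G n \<sigma> \<Longrightarrow> mat_trace (rep_sum G n \<sigma>) = (\<Sum>g\<in>carrier G. mat_trace (\<sigma> g))"
  by (simp add: rep_sum_def mat_trace_def rep_dim sum.swap[of _ "carrier G"])

context group
begin

lemma rep_mult_rep_sum:
  assumes rep: "is_rep G n \<sigma>" and h: "h \<in> carrier G"
  shows "\<sigma> h * rep_sum G n \<sigma> = rep_sum G n \<sigma>"
proof (rule eq_matI)
  define P where "P = rep_sum G n \<sigma>"
  have P: "P \<in> carrier_mat n n" by (simp add: P_def rep_sum_carrier)
  have rh: "\<sigma> h \<in> carrier_mat n n" using rep h by (rule rep_carrier)
  fix a b assume "a < dim_row P" and "b < dim_col P"
  then have a: "a < n" and b: "b < n" using P by auto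
  have "(\<sigma> h * P) $$ (a,b) = (\<Sum>c<n. \<sigma> h $$ (a,c) * P $$ (c,b))" by (rule index_mult_mat_sum[OF rh P a b])
  also have "\<dots> = (\<Sum>g\<in>carrier G. \<Sum>c<n. \<sigma> h $$ (a,c) * \<sigma> g $$ (c,b))"
    using b by (simp add: P_def rep_sum_def sum_distrib_left sum.swap[of _ "{..<n}"])
  also have "\<dots> = (\<Sum>g\<in>carrier G. \<sigma> (h \<otimes> g) $$ (a,b))"
    by (rule sum.cong, simp, subst index_rep_mult[OF rep h _ a b], auto)
  also have "\<dots> = (\<Sum>g\<in>carrier G. \<sigma> g $$ (a,b))" by (rule sum_carrier_reindex_left[OF h])
  also have "\<dots> = P $$ (a,b)" using a b by (simp add: P_def rep_sum_def)
  finally show "(\<sigma> h * rep_sum G n \<sigma>) $$ (a,b) = rep_sum G n \<sigma> $$ (a,b)" by (simp add: P_def)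
qed (use rep h in \<open>auto simp: rep_sum_def rep_dim\<close>)

lemma rep_sum_mult_rep:
  assumes rep: "is_rep G n \<sigma>" and h: "h \<in> carrier G"
  shows "rep_sum G n \<sigma> * \<sigma> h = rep_sum G n \<sigma>"
proof (rule eq_matI)
  define P where "P = rep_sum G n \<sigma>"
  have P: "P \<in> carrier_mat n n" by (simp add: P_def rep_sum_carrier)
  have rh: "\<sigma> h \<in> carrier_mat n n" using rep h by (rule rep_carrier)
  fix a b assume "a < dim_row P" and "b < dim_col P"
  then have a: "a < n" and b: "b < n" using P by auto
  have "(P * \<sigma> h) $$ (a,b) = (\<Sum>c<n. P $$ (a,c) * \<sigma> h $$ (c,b))" by (rule index_mult_mat_sum[OF P rh a b])
  also have "\<dots> = (\<Sum>g\<in>carrier G. \<Sum>c<n. \<sigma> g $$ (a,c) * \<sigma> h $$ (c,b))"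
    using a by (simp add: P_def rep_sum_def sum_distrib_right sum.swap[of _ "{..<n}"])
  also have "\<dots> = (\<Sum>g\<in>carrier G. \<sigma> (g \<otimes> h) $$ (a,b))"
    by (rule sum.cong, simp, subst index_rep_mult[OF rep _ h a b], auto)
  also have "\<dots> = (\<Sum>g\<in>carrier G. \<sigma> g $$ (a,b))" by (rule sum_carrier_reindex_right[OF h])
  also have "\<dots> = P $$ (a,b)" using a b by (simp add: P_def rep_sum_def)
  finally show "(rep_sum G n \<sigma> * \<sigma> h) $$ (a,b) = rep_sum G n \<sigma> $$ (a,b)" by (simp add: P_def)
qed (use rep h in \<open>auto simp: rep_sum_def rep_dim\<close>)

text \<open>By Schur, \<open>\<Sum>\<^sub>g \<sigma> g\<close> is a scalar \<open>c\<close>; a nonzero trace \<open>n * c\<close> makes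
  \<open>\<sigma> h * (c \<cdot> 1) = c \<cdot> 1\<close> force \<open>\<sigma> h = 1\<close>.\<close>
lemma irreducible_rep_eq_one_if_trace_sum_nonzero:
  assumes irr: "irreducible_rep G n \<sigma>" and tr: "(\<Sum>g\<in>carrier G. mat_trace (\<sigma> g)) \<noteq> 0"
    and h: "h \<in> carrier G"
  shows "\<sigma> h = 1\<^sub>m n"
proof -
  have rep: "is_rep G n \<sigma>" using irr by (simp add: irreducible_rep_def)
  obtain c where Pc: "rep_sum G n \<sigma> = c \<cdot>\<^sub>m 1\<^sub>m n"
    using schur_lemma[OF irr rep_sum_carrier] rep_mult_rep_sum[OF rep] rep_sum_mult_rep[OF rep] by metis
  have "c \<noteq> 0" using tr Pc mat_trace_rep_sum[OF rep] mat_trace_smult[of "1\<^sub>m n" n c] by auto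
  have rh: "\<sigma> h \<in> carrier_mat n n" using rep h by (rule rep_carrier)
  have "c \<cdot>\<^sub>m \<sigma> h = \<sigma> h * rep_sum G n \<sigma>"
    using Pc rh by (simp add: mult_smult_distrib[OF rh one_carrier_mat])
  also have "\<dots> = c \<cdot>\<^sub>m 1\<^sub>m n" using rep_mult_rep_sum[OF rep h] Pc by simp
  finally have e: "c \<cdot>\<^sub>m \<sigma> h = c \<cdot>\<^sub>m 1\<^sub>m n" .
  show ?thesis
  proof (rule eq_matI)
    fix a b assume ab: "a < dim_row (1\<^sub>m n :: complex mat)" "b < dim_col (1\<^sub>m n :: complex mat)"
    then have "(c \<cdot>\<^sub>m \<sigma> h) $$ (a,b) = (c \<cdot>\<^sub>m 1\<^sub>m n) $$ (a,b)" using e by simp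
    then show "\<sigma> h $$ (a,b) = (1\<^sub>m n :: complex mat) $$ (a,b)" using \<open>c \<noteq> 0\<close> rh ab by auto
  qed (use rh in auto)
qed

end

section \<open>Representations with prescribed kernel\<close>

lemma bij_betw_preimage_unique:
  fixes e :: "nat \<Rightarrow> 'a"
  assumes b: "bij_betw e {0..<m} C" and c: "c \<in> C"
  shows "\<exists>j0<m. \<forall>j<m. e j = c \<longleftrightarrow> j = j0"
proof -
  obtain j0 where j0: "j0 < m" "e j0 = c" using b c unfolding bij_betw_def by auto
  have inj: "inj_on e {0..<m}" using b unfolding bij_betw_def by auto
  have "e j = c \<longleftrightarrow> j = j0" if j: "j < m" for j
  proof
    assume "e j = c"
    then show "j = j0" using inj_onD[OF inj, of j j0] j j0 by auto
  qed (use j0 in auto)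
  then show ?thesis using j0 by auto
qed

text \<open>Left multiplication as permutation matrices, the elements of \<open>G\<close> being enumerated by \<open>e\<close>.\<close>
definition regular_rep :: "('a, 'b) monoid_scheme \<Rightarrow> nat \<Rightarrow> (nat \<Rightarrow> 'a) \<Rightarrow> 'a \<Rightarrow> complex mat" where
  "regular_rep G m e x = mat m m (\<lambda>(i, j). if e i = x \<otimes>\<^bsub>G\<^esub> e j then 1 else 0)"

lemma regular_rep_carrier: "regular_rep G m e x \<in> carrier_mat m m"
  by (simp add: regular_rep_def)

context group
begin

lemma regular_rep_mult:
  assumes e: "bij_betw e {0..<m} (carrier G)" and x: "x \<in> carrier G" and y: "y \<in> carrier G"
  shows "regular_rep G m e (x \<otimes> y) = regular_rep G m e x * regular_rep G m e y"
proof (rule eq_matI)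
  let ?R = "regular_rep G m e"
  have ec: "\<And>j. j < m \<Longrightarrow> e j \<in> carrier G" using e unfolding bij_betw_def by auto
  fix i l assume "i < dim_row (?R x * ?R y)" "l < dim_col (?R x * ?R y)"
  then have i: "i < m" and l: "l < m" by (auto simp: regular_rep_def)
  obtain j0 where j0: "j0 < m" "\<forall>j<m. (e j = y \<otimes> e l) \<longleftrightarrow> (j = j0)"
    using bij_betw_preimage_unique[OF e, of "y \<otimes> e l"] y ec[OF l] by auto
  have "(?R x * ?R y) $$ (i, l) = (\<Sum>j<m. ?R x $$ (i, j) * ?R y $$ (j, l))"
    by (rule index_mult_mat_sum[OF regular_rep_carrier regular_rep_carrier i l])
  also have "\<dots> = (\<Sum>j<m. if j = j0 then (if e i = x \<otimes> e j then 1 else 0) else 0)"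
    by (rule sum.cong, simp, use i l j0 in \<open>auto simp: regular_rep_def\<close>)
  also have "\<dots> = (if e i = x \<otimes> e j0 then 1 else 0)" using j0 by simp
  also have "\<dots> = ?R (x \<otimes> y) $$ (i, l)"
    using i l j0 x y ec by (auto simp: regular_rep_def m_assoc)
  finally show "?R (x \<otimes> y) $$ (i, l) = (?R x * ?R y) $$ (i, l)" by simp
qed (auto simp: regular_rep_def)

lemma regular_rep_unitary:
  assumes e: "bij_betw e {0..<m} (carrier G)" and x: "x \<in> carrier G"
  shows "unitary m (regular_rep G m e x)"
  unfolding unitary_def
proof (intro conjI regular_rep_carrier eq_matI)
  let ?R = "regular_rep G m e"
  have ec: "\<And>j. j < m \<Longrightarrow> e j \<in> carrier G" using e unfolding bij_betw_def by auto
  have einj: "\<And>i j. i < m \<Longrightarrow> j < m \<Longrightarrow> e i = e j \<longleftrightarrow> i = j"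
    using e unfolding bij_betw_def inj_on_def by auto
  fix i l assume "i < dim_row (1\<^sub>m m :: complex mat)" "l < dim_col (1\<^sub>m m :: complex mat)"
  then have i: "i < m" and l: "l < m" by auto
  obtain j0 where j0: "j0 < m" "\<forall>j<m. (e j = x \<otimes> e i) \<longleftrightarrow> (j = j0)"
    using bij_betw_preimage_unique[OF e, of "x \<otimes> e i"] x ec[OF i] by auto
  have "(mat_adjoint (?R x) * ?R x) $$ (i, l) = (\<Sum>j<m. mat_adjoint (?R x) $$ (i, j) * ?R x $$ (j, l))"
    by (rule index_mult_mat_sum[OF carrier_mat_adjoint[OF regular_rep_carrier] regular_rep_carrier i l])
  also have "\<dots> = (\<Sum>j<m. if j = j0 then (if e j = x \<otimes> e l then 1 else 0) else 0)"
    by (rule sum.cong, simp, use i l j0 in \<open>auto simp: regular_rep_def\<close>)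
  also have "\<dots> = (if x \<otimes> e i = x \<otimes> e l then 1 else 0)"
  proof -
    have "e j0 = x \<otimes> e i" using j0 by auto
    then show ?thesis using j0(1) by simp
  qed
  also have "\<dots> = (1\<^sub>m m :: complex mat) $$ (i, l)"
    using i l x ec einj by auto
  finally show "(mat_adjoint (?R x) * ?R x) $$ (i, l) = (1\<^sub>m m :: complex mat) $$ (i, l)" .
qed (auto simp: regular_rep_def)

lemma exists_faithful_unitary_rep:
  assumes fin: "finite (carrier G)"
  shows "\<exists>m R. unitary_rep G m R \<and> (\<forall>x\<in>carrier G. R x = 1\<^sub>m m \<longrightarrow> x = \<one>)"
proof -
  define m where "m = card (carrier G)"
  obtain e where e: "bij_betw e {0..<m} (carrier G)"
    using ex_bij_betw_nat_finite[OF fin] unfolding m_def by auto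
  have m: "m > 0" using fin by (auto simp: m_def card_gt_0_iff)
  have ec: "\<And>j. j < m \<Longrightarrow> e j \<in> carrier G" using e unfolding bij_betw_def by auto
  have einj: "\<And>i j. i < m \<Longrightarrow> j < m \<Longrightarrow> e i = e j \<longleftrightarrow> i = j"
    using e unfolding bij_betw_def inj_on_def by auto
  have one: "regular_rep G m e \<one> = 1\<^sub>m m"
    by (rule eq_matI) (auto simp: regular_rep_def ec einj)
  have faithful: "x = \<one>" if x: "x \<in> carrier G" and "regular_rep G m e x = 1\<^sub>m m" for x
  proof -
    have "regular_rep G m e x $$ (0, 0) = 1" using that m by simp
    then have "e 0 = x \<otimes> e 0" using m by (simp add: regular_rep_def split: if_splits)
    then show ?thesis using x ec[OF m] by (metis l_one one_closed r_cancel_one')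
  qed
  have "unitary_rep G m (regular_rep G m e)"
    unfolding unitary_rep_def is_rep_def
    using m one regular_rep_carrier regular_rep_mult[OF e] regular_rep_unitary[OF e] by auto
  then show ?thesis using faithful by blast
qed

end

lemma unitary_rep_comp_hom:
  assumes G: "group G" and H: "group H" and \<pi>: "\<pi> \<in> hom G H" and R: "unitary_rep H m R"
  shows "unitary_rep G m (R \<circ> \<pi>)"
proof -
  have "\<pi> x \<in> carrier H" if "x \<in> carrier G" for x using \<pi> that by (auto simp: hom_def)
  moreover have "\<pi> (x \<otimes>\<^bsub>G\<^esub> y) = \<pi> x \<otimes>\<^bsub>H\<^esub> \<pi> y" if "x \<in> carrier G" "y \<in> carrier G" for x y
    using \<pi> that by (auto simp: hom_def)
  moreover have "\<pi> \<one>\<^bsub>G\<^esub> = \<one>\<^bsub>H\<^esub>"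
    using \<pi> G H by (simp add: group_hom.hom_one group_hom_axioms_def group_hom_def)
  ultimately show ?thesis using R unfolding unitary_rep_def is_rep_def by auto
qed

lemma (in group) exists_unitary_rep_with_kernel:
  assumes fin: "finite (carrier G)" and N: "N \<lhd> G"
  shows "\<exists>m R. unitary_rep G m R \<and> (\<forall>x\<in>carrier G. R x = 1\<^sub>m m \<longleftrightarrow> x \<in> N)"
proof -
  interpret N: normal N G by (rule N)
  have H: "group (G Mod N)" by (rule N.factorgroup_is_group)
  have "finite (carrier (G Mod N))" using fin by (simp add: carrier_FactGroup)
  then obtain m R where R: "unitary_rep (G Mod N) m R"
    and faithful: "\<forall>x\<in>carrier (G Mod N). R x = 1\<^sub>m m \<longrightarrow> x = \<one>\<^bsub>G Mod N\<^esub>"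
    using group.exists_faithful_unitary_rep[OF H] by auto
  have U: "unitary_rep G m (R \<circ> (\<lambda>a. N #> a))"
    by (rule unitary_rep_comp_hom[OF is_group H N.r_coset_hom_Mod R])
  have "(R \<circ> (\<lambda>a. N #> a)) x = 1\<^sub>m m \<longleftrightarrow> x \<in> N" if x: "x \<in> carrier G" for x
  proof
    assume "(R \<circ> (\<lambda>a. N #> a)) x = 1\<^sub>m m"
    then have "N #> x = N" using faithful x by (auto simp: carrier_FactGroup)
    moreover have "x \<in> N #> x" using x N.subgroup_axioms by (simp add: rcos_self)
    ultimately show "x \<in> N" by simp
  next
    assume "x \<in> N"
    then have "N #> x = N" by (simp add: N.rcos_const)
    moreover have "R N = 1\<^sub>m m"
      using R rep_one[of "G Mod N" m R] by (simp add: unitary_rep_def)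
    ultimately show "(R \<circ> (\<lambda>a. N #> a)) x = 1\<^sub>m m" by simp
  qed
  then show ?thesis using U by blast
qed

section \<open>Orthonormal lists\<close>

lemma cscalar_prod_sum: "(x :: complex vec) \<bullet>c y = (\<Sum>i<dim_vec y. x $ i * cnj (y $ i))"
  by (simp add: scalar_prod_def atLeast0LessThan)

lemma cscalar_prod_swap: "dim_vec x = dim_vec y \<Longrightarrow> (x :: complex vec) \<bullet>c y = cnj (y \<bullet>c x)"
  by (simp add: cscalar_prod_sum mult.commute)

lemma cscalar_prod_smult_left:
  "dim_vec x = dim_vec y \<Longrightarrow> (c \<cdot>\<^sub>v x :: complex vec) \<bullet>c y = c * (x \<bullet>c y)"
  by (simp add: cscalar_prod_sum sum_distrib_left mult.assoc)

lemma cscalar_prod_smult_right: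
  "dim_vec x = dim_vec y \<Longrightarrow> (x :: complex vec) \<bullet>c (c \<cdot>\<^sub>v y) = cnj c * (x \<bullet>c y)"
  by (simp add: cscalar_prod_sum sum_distrib_left algebra_simps)

lemma cscalar_prod_self: "(x :: complex vec) \<bullet>c x = complex_of_real (\<Sum>i<dim_vec x. (cmod (x $ i))\<^sup>2)"
  unfolding cscalar_prod_sum of_real_sum by (rule sum.cong, simp, rule complex_norm_square[symmetric])

lemma exists_normalizing_scalar:
  fixes v :: "complex vec"
  assumes "v \<noteq> 0\<^sub>v (dim_vec v)"
  shows "\<exists>c. (c \<cdot>\<^sub>v v) \<bullet>c (c \<cdot>\<^sub>v v) = 1"
proof -
  define s where "s = (\<Sum>i<dim_vec v. (cmod (v $ i))\<^sup>2)"
  have s: "v \<bullet>c v = complex_of_real s" by (simp add: s_def cscalar_prod_self)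
  have "v \<bullet>c v \<noteq> 0" using assms conjugate_square_eq_0_vec[of v "dim_vec v"] by auto
  then have s0: "s > 0" using s by (metis less_eq_real_def of_real_0 s_def sum_nonneg zero_le_power2)
  define c where "c = complex_of_real (1 / sqrt s)"
  have "(c \<cdot>\<^sub>v v) \<bullet>c (c \<cdot>\<^sub>v v) = c * cnj c * (v \<bullet>c v)"
    by (simp add: cscalar_prod_smult_left cscalar_prod_smult_right mult.assoc)
  also have "\<dots> = complex_of_real (1 / sqrt s * (1 / sqrt s) * s)"
    by (simp only: c_def s complex_cnj_complex_of_real of_real_mult)
  also have "1 / sqrt s * (1 / sqrt s) * s = 1"
    using s0 by (simp add: field_simps)
  finally show ?thesis by auto
qed

definition orthonormal :: "nat \<Rightarrow> complex vec list \<Rightarrow> bool" where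
  "orthonormal m vs \<longleftrightarrow> set vs \<subseteq> carrier_vec m \<and>
     (\<forall>i<length vs. \<forall>j<length vs. vs ! i \<bullet>c vs ! j = (if i = j then 1 else 0))"

lemma orthonormal_Nil [simp]: "orthonormal m []"
  by (simp add: orthonormal_def)

lemma orthonormal_take: "orthonormal m vs \<Longrightarrow> orthonormal m (take k vs)"
  unfolding orthonormal_def by (auto dest: in_set_takeD)

lemma orthonormal_appendD2:
  assumes "orthonormal m (vs @ cs)"
  shows "orthonormal m cs"
  unfolding orthonormal_def
proof (intro conjI allI impI)
  show "set cs \<subseteq> carrier_vec m" using assms by (auto simp: orthonormal_def)
  fix i j assume i: "i < length cs" and j: "j < length cs"
  have "(vs @ cs) ! (length vs + i) \<bullet>c (vs @ cs) ! (length vs + j)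
      = (if length vs + i = length vs + j then 1 else 0)"
    using assms i j unfolding orthonormal_def by (metis add_less_cancel_left length_append)
  then show "cs ! i \<bullet>c cs ! j = (if i = j then 1 else 0)" by (simp add: nth_append)
qed

lemma orthonormal_snoc:
  assumes o: "orthonormal m vs" and v: "v \<in> carrier_vec m" and vv: "v \<bullet>c v = 1"
    and orth: "\<And>i. i < length vs \<Longrightarrow> v \<bullet>c vs ! i = 0"
  shows "orthonormal m (vs @ [v])"
  unfolding orthonormal_def
proof (intro conjI allI impI)
  have vsc: "set vs \<subseteq> carrier_vec m" using o by (simp add: orthonormal_def)
  then show "set (vs @ [v]) \<subseteq> carrier_vec m" using v by auto
  have orth': "vs ! i \<bullet>c v = 0" if "i < length vs" for i
  proof -
    have "vs ! i \<in> carrier_vec m" using vsc that by auto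
    then show ?thesis using cscalar_prod_swap[of "vs ! i" v] orth[OF that] v by simp
  qed
  fix i j assume i: "i < length (vs @ [v])" and j: "j < length (vs @ [v])"
  consider "i < length vs" "j < length vs" | "i < length vs" "j = length vs"
    | "i = length vs" "j < length vs" | "i = length vs" "j = length vs"
    using i j by fastforce
  then show "(vs @ [v]) ! i \<bullet>c (vs @ [v]) ! j = (if i = j then 1 else 0)"
    by cases (use o orth orth' vv in \<open>auto simp: nth_append orthonormal_def\<close>)
qed

definition subspace_vec :: "nat \<Rightarrow> complex vec set \<Rightarrow> bool" where
  "subspace_vec m W \<longleftrightarrow> W \<subseteq> carrier_vec m \<and> 0\<^sub>v m \<in> W \<and>
     (\<forall>v \<in> W. \<forall>w \<in> W. v + w \<in> W) \<and> (\<forall>c. \<forall>v \<in> W. c \<cdot>\<^sub>v v \<in> W)"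

lemma mat_of_cols_mult_vec_mem:
  assumes W: "subspace_vec m W" and vs: "set vs \<subseteq> W" and a: "a \<in> carrier_vec (length vs)"
  shows "mat_of_cols m vs *\<^sub>v a \<in> W"
proof -
  interpret vec_module "TYPE(complex)" m .
  have "lincomb_list c vs \<in> W" for c :: "nat \<Rightarrow> complex"
    using vs by (induction vs arbitrary: c) (use W in \<open>auto simp: subspace_vec_def\<close>)
  moreover have "\<forall>w\<in>set vs. dim_vec w = m" using W vs by (auto simp: subspace_vec_def)
  then have "lincomb_list (\<lambda>i. a $ i) vs = mat_of_cols m vs *\<^sub>v vec (length vs) (\<lambda>i. a $ i)"
    by (rule lincomb_list_as_mat_mult)
  moreover have "vec (length vs) (\<lambda>i. a $ i) = a" using a by auto
  ultimately show ?thesis by metis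
qed

lemma adjoint_mat_of_cols_mult_self:
  assumes "orthonormal m vs"
  shows "mat_adjoint (mat_of_cols m vs) * mat_of_cols m vs = 1\<^sub>m (length vs)"
proof (rule eq_matI)
  fix i j assume "i < dim_row (1\<^sub>m (length vs) :: complex mat)" "j < dim_col (1\<^sub>m (length vs) :: complex mat)"
  then have i: "i < length vs" and j: "j < length vs" by auto
  have vc: "vs ! i \<in> carrier_vec m" "vs ! j \<in> carrier_vec m" using assms i j by (auto simp: orthonormal_def)
  have "(mat_adjoint (mat_of_cols m vs) * mat_of_cols m vs) $$ (i, j) = (\<Sum>a<m. cnj (vs ! i $ a) * vs ! j $ a)"
    using i j by (simp add: scalar_prod_def atLeast0LessThan mat_of_cols_index)
  also have "\<dots> = vs ! j \<bullet>c vs ! i" using vc by (simp add: cscalar_prod_sum mult.commute)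
  also have "\<dots> = (1\<^sub>m (length vs) :: complex mat) $$ (i, j)" using assms i j by (auto simp: orthonormal_def)
  finally show "(mat_adjoint (mat_of_cols m vs) * mat_of_cols m vs) $$ (i, j) = (1\<^sub>m (length vs) :: complex mat) $$ (i, j)" .
qed auto

lemma index_mult_mat_vec_sum:
  assumes "A \<in> carrier_mat n m" "v \<in> carrier_vec m" "i < n"
  shows "(A *\<^sub>v v) $ i = (\<Sum>k<m. A $$ (i, k) * v $ k)"
  using assms by (simp add: scalar_prod_def atLeast0LessThan)

lemma index_adjoint_mat_of_cols_mult_vec:
  fixes vs :: "complex vec list"
  assumes vs: "set vs \<subseteq> carrier_vec m" and w: "w \<in> carrier_vec m" and i: "i < length vs"
  shows "(mat_adjoint (mat_of_cols m vs) *\<^sub>v w) $ i = w \<bullet>c vs ! i"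
proof -
  have vi: "vs ! i \<in> carrier_vec m" using vs i by auto
  have "(mat_adjoint (mat_of_cols m vs) *\<^sub>v w) $ i = (\<Sum>k<m. mat_adjoint (mat_of_cols m vs) $$ (i, k) * w $ k)"
    using w i by (intro index_mult_mat_vec_sum) auto
  also have "\<dots> = (\<Sum>k<m. w $ k * cnj (vs ! i $ k))"
    using i by (intro sum.cong refl) (simp add: mat_of_cols_index mult.commute)
  also have "\<dots> = w \<bullet>c vs ! i" using vi by (simp add: cscalar_prod_sum)
  finally show ?thesis .
qed

definition orth_proj :: "nat \<Rightarrow> complex vec list \<Rightarrow> complex vec \<Rightarrow> complex vec" where
  "orth_proj m vs u = mat_of_cols m vs *\<^sub>v (mat_adjoint (mat_of_cols m vs) *\<^sub>v u)"

lemma orth_proj_carrier: "orth_proj m vs u \<in> carrier_vec m"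
  unfolding orth_proj_def by (intro carrier_vecI) simp

lemma orth_proj_mem:
  assumes "subspace_vec m W" "set vs \<subseteq> W" "u \<in> carrier_vec m"
  shows "orth_proj m vs u \<in> W"
  unfolding orth_proj_def
  by (rule mat_of_cols_mult_vec_mem[OF assms(1,2)
        mult_mat_vec_carrier[OF carrier_mat_adjoint[OF mat_of_cols_carrier(1)] assms(3)]])

lemma mult_mat_vec_zero [simp]: "A \<in> carrier_mat n m \<Longrightarrow> A *\<^sub>v 0\<^sub>v m = 0\<^sub>v n"
  by (rule eq_vecI) (auto simp: row_def)

lemma orthonormal_length_le:
  assumes o: "orthonormal m vs"
  shows "length vs \<le> m"
proof (rule ccontr)
  assume "\<not> length vs \<le> m"
  then have lm: "m < length vs" by simp
  define ws where "ws = take m vs"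
  define B where "B = mat_of_cols m ws"
  have lw: "length ws = m" using lm by (simp add: ws_def)
  have B: "B \<in> carrier_mat m m" unfolding B_def using mat_of_cols_carrier(1)[of m ws] lw by metis
  have "mat_adjoint B * B = 1\<^sub>m m"
    using adjoint_mat_of_cols_mult_self[OF orthonormal_take[OF o, of m]] lw by (simp add: B_def ws_def)
  then have BB: "B * mat_adjoint B = 1\<^sub>m m"
    using mat_mult_left_right_inverse[OF carrier_mat_adjoint[OF B] B] by simp
  define b where "b = vs ! m"
  have bc: "b \<in> carrier_vec m" using o lm by (auto simp: orthonormal_def b_def)
  have wsc: "set ws \<subseteq> carrier_vec m" using o by (auto simp: orthonormal_def ws_def dest: in_set_takeD)
  have z: "mat_adjoint B *\<^sub>v b = 0\<^sub>v m"
  proof (rule eq_vecI)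
    fix i assume "i < dim_vec (0\<^sub>v m :: complex vec)"
    then have i: "i < m" by simp
    have "(mat_adjoint B *\<^sub>v b) $ i = b \<bullet>c ws ! i"
      unfolding B_def by (rule index_adjoint_mat_of_cols_mult_vec[OF wsc bc]) (use i lw in auto)
    also have "\<dots> = vs ! m \<bullet>c vs ! i" using i lw by (simp add: ws_def b_def)
    also have "\<dots> = 0" using o i lm by (auto simp: orthonormal_def)
    finally show "(mat_adjoint B *\<^sub>v b) $ i = (0\<^sub>v m :: complex vec) $ i" using i by simp
  qed (use B in auto)
  have "b = (B * mat_adjoint B) *\<^sub>v b" using BB bc by simp
  also have "\<dots> = B *\<^sub>v (mat_adjoint B *\<^sub>v b)" using B bc by (simp add: assoc_mult_mat_vec[of _ m m _ m])
  also have "\<dots> = 0\<^sub>v m" using z B by simp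
  finally have "b \<bullet>c b = 0" by simp
  moreover have "b \<bullet>c b = 1" using o lm by (auto simp: orthonormal_def b_def)
  ultimately show False by simp
qed

lemma adjoint_mat_of_cols_mult_residual:
  assumes o: "orthonormal m vs" and u: "u \<in> carrier_vec m"
  shows "mat_adjoint (mat_of_cols m vs) *\<^sub>v (u + (-1) \<cdot>\<^sub>v orth_proj m vs u) = 0\<^sub>v (length vs)"
proof -
  define k where "k = length vs"
  define B where "B = mat_of_cols m vs"
  have B: "B \<in> carrier_mat m k" by (simp add: B_def k_def)
  have BB: "mat_adjoint B * B = 1\<^sub>m k" using adjoint_mat_of_cols_mult_self[OF o] by (simp add: B_def k_def)
  define a where "a = mat_adjoint B *\<^sub>v u"
  have a: "a \<in> carrier_vec k" unfolding a_def using carrier_mat_adjoint[OF B] u by simp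
  define p where "p = B *\<^sub>v a"
  have p: "p \<in> carrier_vec m" using B a by (simp add: p_def)
  have Bp: "mat_adjoint B *\<^sub>v p = a" unfolding p_def using B a BB
    by (simp add: assoc_mult_mat_vec[symmetric, of _ k m _ k])
  have "mat_adjoint B *\<^sub>v (u + (-1) \<cdot>\<^sub>v p) = mat_adjoint B *\<^sub>v u + mat_adjoint B *\<^sub>v ((-1) \<cdot>\<^sub>v p)"
    using B u p by (simp add: mult_add_distrib_mat_vec[of _ k m])
  also have "\<dots> = a + (-1) \<cdot>\<^sub>v a"
    using mult_mat_vec[of "mat_adjoint B" k m p "-1"] B p Bp by (simp add: a_def)
  also have "\<dots> = 0\<^sub>v k" using a by (intro eq_vecI) auto
  finally show ?thesis by (simp add: orth_proj_def B_def k_def p_def a_def)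
qed

lemma orthonormal_snoc_residual:
  assumes o: "orthonormal m vs" and u: "u \<in> carrier_vec m" and ne: "orth_proj m vs u \<noteq> u"
  shows "\<exists>c. orthonormal m (vs @ [c \<cdot>\<^sub>v (u + (-1) \<cdot>\<^sub>v orth_proj m vs u)])"
proof -
  define v0 where "v0 = u + (-1) \<cdot>\<^sub>v orth_proj m vs u"
  have vsc: "set vs \<subseteq> carrier_vec m" using o by (simp add: orthonormal_def)
  have p: "orth_proj m vs u \<in> carrier_vec m" by (rule orth_proj_carrier)
  have v0: "v0 \<in> carrier_vec m" using u p by (simp add: v0_def)
  have "v0 \<noteq> 0\<^sub>v m"
  proof
    assume "v0 = 0\<^sub>v m"
    then have "(u + (-1) \<cdot>\<^sub>v orth_proj m vs u) $ i = 0" if "i < m" for i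
      using that by (simp add: v0_def)
    then have "u $ i = orth_proj m vs u $ i" if "i < m" for i
      using u p that by fastforce
    then have "u = orth_proj m vs u" using u p by (intro eq_vecI) auto
    then show False using ne by simp
  qed
  then obtain c where vv: "(c \<cdot>\<^sub>v v0) \<bullet>c (c \<cdot>\<^sub>v v0) = 1"
    using exists_normalizing_scalar[of v0] v0 by auto
  have "(c \<cdot>\<^sub>v v0) \<bullet>c vs ! i = 0" if i: "i < length vs" for i
  proof -
    have vi: "vs ! i \<in> carrier_vec m" using vsc i by auto
    have "v0 \<bullet>c vs ! i = (mat_adjoint (mat_of_cols m vs) *\<^sub>v v0) $ i"
      by (rule index_adjoint_mat_of_cols_mult_vec[OF vsc v0 i, symmetric])
    also have "\<dots> = 0" using adjoint_mat_of_cols_mult_residual[OF o u] i by (simp add: v0_def)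
    finally show ?thesis using v0 vi by (simp add: cscalar_prod_smult_left)
  qed
  then have "orthonormal m (vs @ [c \<cdot>\<^sub>v v0])"
    using orthonormal_snoc[OF o _ vv] v0 by simp
  then show ?thesis unfolding v0_def by blast
qed

lemma orthonormal_extend_in_subspace:
  assumes W: "subspace_vec m W" and o: "orthonormal m vs" and vs: "set vs \<subseteq> W"
  shows "\<exists>cs. orthonormal m (vs @ cs) \<and> set cs \<subseteq> W \<and> (\<forall>w\<in>W. orth_proj m (vs @ cs) w = w)"
proof -
  define P where "P k \<longleftrightarrow> (\<exists>cs. orthonormal m (vs @ cs) \<and> set cs \<subseteq> W \<and> length cs = k)" for k
  have P0: "P 0" using o by (auto simp: P_def intro: exI[of _ "[]"])
  have bound: "\<forall>k. P k \<longrightarrow> k \<le> m"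
  proof (intro allI impI)
    fix k assume "P k"
    then obtain cs where "orthonormal m (vs @ cs)" "length cs = k" by (auto simp: P_def)
    then show "k \<le> m" using orthonormal_length_le[of m "vs @ cs"] by simp
  qed
  obtain k where "P k" and k_max: "\<forall>k'. P k' \<longrightarrow> k' \<le> k"
    using Nat.ex_has_greatest_nat[OF P0 bound] by blast
  then obtain cs where cs: "orthonormal m (vs @ cs)" "set cs \<subseteq> W" "length cs = k"
    by (auto simp: P_def)
  have "orth_proj m (vs @ cs) w = w" if w: "w \<in> W" for w
  proof (rule ccontr)
    assume ne: "orth_proj m (vs @ cs) w \<noteq> w"
    have wc: "w \<in> carrier_vec m" using W w by (auto simp: subspace_vec_def)
    define v where "v c = c \<cdot>\<^sub>v (w + (-1) \<cdot>\<^sub>v orth_proj m (vs @ cs) w)" for c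
    obtain c where c: "orthonormal m ((vs @ cs) @ [v c])"
      using orthonormal_snoc_residual[OF cs(1) wc ne] by (auto simp: v_def)
    have "orth_proj m (vs @ cs) w \<in> W" using orth_proj_mem[OF W _ wc] vs cs(2) by auto
    then have "v c \<in> W" using W w unfolding subspace_vec_def v_def by blast
    then have "P (Suc k)" using c cs unfolding P_def by (intro exI[of _ "cs @ [v c]"]) auto
    then show False using k_max by auto
  qed
  then show ?thesis using cs by blast
qed

lemma index_mult_mat_unit_vec:
  fixes A :: "complex mat"
  assumes "A \<in> carrier_mat n m" "i < n" "j < m"
  shows "(A *\<^sub>v unit_vec m j) $ i = A $$ (i, j)"
proof -
  have "(A *\<^sub>v unit_vec m j) $ i = (\<Sum>a\<in>{0..<m}. A $$ (i, a) * unit_vec m j $ a)"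
    using assms by (simp add: scalar_prod_def row_def)
  also have "\<dots> = (\<Sum>a\<in>{0..<m}. (if a = j then A $$ (i, a) else 0))"
    by (rule sum.cong) (use assms in auto)
  also have "\<dots> = A $$ (i, j)" using assms by simp
  finally show ?thesis .
qed

text \<open>Comparing traces of \<open>B * B\<^sup>* = 1\<^sub>m\<close> and \<open>B\<^sup>* * B = 1\<^sub>k\<close>.\<close>
lemma orthonormal_length_eq_if_spanning:
  assumes o: "orthonormal m vs" and span: "\<And>u. u \<in> carrier_vec m \<Longrightarrow> orth_proj m vs u = u"
  shows "length vs = m"
proof -
  define k where "k = length vs"
  define B where "B = mat_of_cols m vs"
  have B: "B \<in> carrier_mat m k" by (simp add: B_def k_def)
  have BB: "mat_adjoint B * B = 1\<^sub>m k" using adjoint_mat_of_cols_mult_self[OF o] by (simp add: B_def k_def)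
  have "B * mat_adjoint B = 1\<^sub>m m"
  proof (rule eq_matI)
    fix i j assume "i < dim_row (1\<^sub>m m :: complex mat)" "j < dim_col (1\<^sub>m m :: complex mat)"
    then have i: "i < m" and j: "j < m" by auto
    have "(B * mat_adjoint B) $$ (i, j) = ((B * mat_adjoint B) *\<^sub>v unit_vec m j) $ i"
      using B i j by (simp add: index_mult_mat_unit_vec[of _ m m])
    also have "\<dots> = unit_vec m j $ i"
      using span[of "unit_vec m j"] B by (simp add: orth_proj_def B_def assoc_mult_mat_vec[of _ m k _ m])
    finally show "(B * mat_adjoint B) $$ (i, j) = (1\<^sub>m m :: complex mat) $$ (i, j)" using i j by simp
  qed (use B in auto)
  then have "of_nat m = mat_trace (B * mat_adjoint B)" by simp
  also have "\<dots> = mat_trace (mat_adjoint B * B)" by (rule mat_trace_mult_comm[OF B carrier_mat_adjoint[OF B]])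
  also have "\<dots> = of_nat k" using BB by simp
  finally show ?thesis by (simp add: k_def)
qed

lemma sum_lessThan_add_split:
  fixes f :: "nat \<Rightarrow> 'a::comm_monoid_add"
  shows "(\<Sum>a<k + l. f a) = (\<Sum>a<k. f a) + (\<Sum>a<l. f (k + a))"
  by (induct l) (auto simp: add.assoc)

lemma mat_of_cols_append_mult_adjoint:
  fixes vs cs :: "complex vec list" and m :: nat
  defines "B \<equiv> mat_of_cols m vs" and "C \<equiv> mat_of_cols m cs" and "U \<equiv> mat_of_cols m (vs @ cs)"
  shows "U * mat_adjoint U = B * mat_adjoint B + C * mat_adjoint C"
proof (rule eq_matI)
  define k where "k = length vs"
  define l where "l = length cs"
  have B: "B \<in> carrier_mat m k" and C: "C \<in> carrier_mat m l"
    by (simp_all add: B_def C_def k_def l_def)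
  have U: "U \<in> carrier_mat m (k + l)"
    unfolding U_def k_def l_def by (metis length_append mat_of_cols_carrier(1))
  fix i j assume "i < dim_row (B * mat_adjoint B + C * mat_adjoint C)"
    "j < dim_col (B * mat_adjoint B + C * mat_adjoint C)"
  then have i: "i < m" and j: "j < m" using B C by auto
  define f where "f a = (vs @ cs) ! a $ i * cnj ((vs @ cs) ! a $ j)" for a
  have "(B * mat_adjoint B) $$ (i, j) = (\<Sum>a<k. B $$ (i, a) * mat_adjoint B $$ (a, j))"
    by (rule index_mult_mat_sum[OF B carrier_mat_adjoint[OF B] i j])
  also have "\<dots> = (\<Sum>a<k. f a)"
    by (rule sum.cong, simp, use i j in \<open>simp add: B_def k_def mat_of_cols_index f_def nth_append\<close>)
  finally have e1: "(B * mat_adjoint B) $$ (i, j) = (\<Sum>a<k. f a)" .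
  have "(C * mat_adjoint C) $$ (i, j) = (\<Sum>a<l. C $$ (i, a) * mat_adjoint C $$ (a, j))"
    by (rule index_mult_mat_sum[OF C carrier_mat_adjoint[OF C] i j])
  also have "\<dots> = (\<Sum>a<l. f (k + a))"
    by (rule sum.cong, simp, use i j in \<open>simp add: C_def l_def k_def mat_of_cols_index f_def nth_append\<close>)
  finally have e2: "(C * mat_adjoint C) $$ (i, j) = (\<Sum>a<l. f (k + a))" .
  have "(U * mat_adjoint U) $$ (i, j) = (\<Sum>a<k + l. U $$ (i, a) * mat_adjoint U $$ (a, j))"
    by (rule index_mult_mat_sum[OF U carrier_mat_adjoint[OF U] i j])
  also have "\<dots> = (\<Sum>a<k + l. f a)"
    by (rule sum.cong, simp, use i j in \<open>simp add: U_def k_def l_def mat_of_cols_index f_def\<close>)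
  also have "\<dots> = (\<Sum>a<k. f a) + (\<Sum>a<l. f (k + a))" by (rule sum_lessThan_add_split)
  finally show "(U * mat_adjoint U) $$ (i, j) = (B * mat_adjoint B + C * mat_adjoint C) $$ (i, j)"
    using e1 e2 i j B C by simp
qed (simp_all add: B_def C_def U_def)

lemma adjoint_mat_of_cols_mult_orthogonal:
  assumes o: "orthonormal m (vs @ cs)"
  shows "mat_adjoint (mat_of_cols m cs) * mat_of_cols m vs = 0\<^sub>m (length cs) (length vs)"
proof (rule eq_matI)
  define k where "k = length vs"
  have vsc: "set vs \<subseteq> carrier_vec m" and csc: "set cs \<subseteq> carrier_vec m"
    using o by (auto simp: orthonormal_def)
  fix i j assume "i < dim_row (0\<^sub>m (length cs) (length vs) :: complex mat)"
    "j < dim_col (0\<^sub>m (length cs) (length vs) :: complex mat)"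
  then have i: "i < length cs" and j: "j < k" by (auto simp: k_def)
  have "cs ! i \<in> carrier_vec m" using csc i by auto
  then have "(mat_adjoint (mat_of_cols m cs) * mat_of_cols m vs) $$ (i, j) = vs ! j \<bullet>c cs ! i"
    using i j by (simp add: scalar_prod_def atLeast0LessThan mat_of_cols_index k_def cscalar_prod_sum mult.commute)
  also have "\<dots> = (vs @ cs) ! j \<bullet>c (vs @ cs) ! (k + i)"
    using i j by (simp add: nth_append k_def)
  also have "\<dots> = 0"
  proof -
    have "j < length (vs @ cs)" "k + i < length (vs @ cs)" using i j by (auto simp: k_def)
    then have "(vs @ cs) ! j \<bullet>c (vs @ cs) ! (k + i) = (if j = k + i then 1 else 0)"
      using o unfolding orthonormal_def by blast
    then show ?thesis using j by simp
  qed
  finally show "(mat_adjoint (mat_of_cols m cs) * mat_of_cols m vs) $$ (i, j)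
      = (0\<^sub>m (length cs) (length vs) :: complex mat) $$ (i, j)"
    using i j by (simp add: k_def)
qed auto

lemma orth_proj_fixes_columns:
  assumes proj: "\<And>w. w \<in> W \<Longrightarrow> orth_proj m vs w = w"
    and M: "M \<in> carrier_mat m j" and cols: "\<And>i. i < j \<Longrightarrow> col M i \<in> W"
  shows "mat_of_cols m vs * (mat_adjoint (mat_of_cols m vs) * M) = M"
proof (rule mat_col_eqI)
  define B where "B = mat_of_cols m vs"
  have B: "B \<in> carrier_mat m (length vs)" by (simp add: B_def)
  fix i assume "i < dim_col M"
  then have i: "i < j" using M by simp
  have aB: "mat_adjoint B \<in> carrier_mat (length vs) m" using B by (rule carrier_mat_adjoint)
  then have aBM: "mat_adjoint B * M \<in> carrier_mat (length vs) j" using M by (rule mult_carrier_mat)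
  have "col (B * (mat_adjoint B * M)) i = B *\<^sub>v (mat_adjoint B *\<^sub>v col M i)"
    by (simp add: col_mult2[OF B aBM i] col_mult2[OF aB M i])
  also have "\<dots> = col M i" using proj[OF cols[OF i]] by (simp add: orth_proj_def B_def)
  finally show "col (mat_of_cols m vs * (mat_adjoint (mat_of_cols m vs) * M)) i = col M i"
    by (simp add: B_def)
qed (use M in auto)

section \<open>Irreducible constituents\<close>

lemma invariant_subspace_orthogonal_decomposition:
  assumes Rc: "\<And>x. x \<in> carrier G \<Longrightarrow> R x \<in> carrier_mat m m"
    and W: "invariant_subspace G m R W" and W0: "W \<noteq> {0\<^sub>v m}" and W_full: "W \<noteq> carrier_vec m"
  shows "\<exists>k B C. 0 < k \<and> k < m \<and> B \<in> carrier_mat m k \<and> C \<in> carrier_mat m (m - k) \<and>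
    mat_adjoint B * B = 1\<^sub>m k \<and> mat_adjoint C * C = 1\<^sub>m (m - k) \<and>
    B * mat_adjoint B + C * mat_adjoint C = 1\<^sub>m m \<and>
    (\<forall>x\<in>carrier G. mat_adjoint C * R x * B = 0\<^sub>m (m - k) k)"
proof -
  have sub: "subspace_vec m W" using W by (auto simp: invariant_subspace_def subspace_vec_def)
  have Wc: "W \<subseteq> carrier_vec m" using sub by (simp add: subspace_vec_def)
  obtain vs where vs: "orthonormal m vs" "set vs \<subseteq> W"
    and proj: "\<And>w. w \<in> W \<Longrightarrow> orth_proj m vs w = w"
    using orthonormal_extend_in_subspace[OF sub orthonormal_Nil] by auto
  have "subspace_vec m (carrier_vec m)" by (auto simp: subspace_vec_def)
  then obtain cs where cs: "orthonormal m (vs @ cs)"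
    and span: "\<And>u. u \<in> carrier_vec m \<Longrightarrow> orth_proj m (vs @ cs) u = u"
    using orthonormal_extend_in_subspace[OF _ vs(1)] vs(2) Wc by blast
  have len: "length (vs @ cs) = m" by (rule orthonormal_length_eq_if_spanning[OF cs span])
  define k where "k = length vs"
  define l where "l = length cs"
  define B where "B = mat_of_cols m vs"
  define C where "C = mat_of_cols m cs"
  define U where "U = mat_of_cols m (vs @ cs)"
  have lk: "l = m - k" using len by (simp add: k_def l_def)
  have B: "B \<in> carrier_mat m k" and C: "C \<in> carrier_mat m l" by (simp_all add: B_def C_def k_def l_def)
  have U: "U \<in> carrier_mat m m" using len unfolding U_def by (metis mat_of_cols_carrier(1))
  have BB: "mat_adjoint B * B = 1\<^sub>m k"
    using adjoint_mat_of_cols_mult_self[OF vs(1)] by (simp add: B_def k_def)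
  have CC: "mat_adjoint C * C = 1\<^sub>m l"
    using adjoint_mat_of_cols_mult_self[OF orthonormal_appendD2[OF cs]] by (simp add: C_def l_def)
  have "mat_adjoint U * U = 1\<^sub>m m" using adjoint_mat_of_cols_mult_self[OF cs] len by (simp add: U_def)
  then have "U * mat_adjoint U = 1\<^sub>m m"
    using mat_mult_left_right_inverse[OF carrier_mat_adjoint[OF U] U] by simp
  then have sum1: "B * mat_adjoint B + C * mat_adjoint C = 1\<^sub>m m"
    using mat_of_cols_append_mult_adjoint[of m vs cs] by (simp add: B_def C_def U_def)
  have k0: "0 < k"
  proof (rule ccontr)
    assume "\<not> 0 < k"
    then have "B *\<^sub>v (mat_adjoint B *\<^sub>v w) = 0\<^sub>v m" for w
      using B by (intro eq_vecI) (auto simp: scalar_prod_def)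
    moreover obtain w where "w \<in> W" "w \<noteq> 0\<^sub>v m" using W0 sub by (auto simp: subspace_vec_def)
    ultimately show False using proj by (auto simp: orth_proj_def B_def)
  qed
  have km: "k < m"
  proof (rule ccontr)
    assume "\<not> k < m"
    then have B': "B \<in> carrier_mat m m" and BB_m: "mat_adjoint B * B = 1\<^sub>m m"
      using B BB lk len by (auto simp: k_def)
    have BB': "B * mat_adjoint B = 1\<^sub>m m"
      using mat_mult_left_right_inverse[OF carrier_mat_adjoint[OF B'] B'] BB_m by simp
    have "u \<in> W" if u: "u \<in> carrier_vec m" for u
    proof -
      have "u = (B * mat_adjoint B) *\<^sub>v u" using BB' u by simp
      also have "\<dots> = orth_proj m vs u"
        using assoc_mult_mat_vec[OF B' carrier_mat_adjoint[OF B'] u] by (simp add: orth_proj_def B_def)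
      also have "\<dots> \<in> W" by (rule orth_proj_mem[OF sub vs(2) u])
      finally show ?thesis .
    qed
    then show False using W_full Wc by auto
  qed
  have CB: "mat_adjoint C * B = 0\<^sub>m l k"
    using adjoint_mat_of_cols_mult_orthogonal[OF cs] by (simp add: B_def C_def k_def l_def)
  have Z: "mat_adjoint C * R x * B = 0\<^sub>m l k" if x: "x \<in> carrier G" for x
  proof -
    have Rx: "R x \<in> carrier_mat m m" by (rule Rc[OF x])
    have cols: "col (R x * B) j \<in> W" if j: "j < k" for j
    proof -
      have vjW: "vs ! j \<in> W" using vs(2) j by (auto simp: k_def)
      then have "vs ! j \<in> carrier_vec m" using Wc by auto
      then have "col B j = vs ! j" using j by (simp add: B_def k_def)
      then have "col (R x * B) j = R x *\<^sub>v vs ! j" using col_mult2[OF Rx B j] by simp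
      then show ?thesis using vjW W x by (simp add: invariant_subspace_def)
    qed
    have RB: "B * (mat_adjoint B * (R x * B)) = R x * B"
      by (rule orth_proj_fixes_columns[of W m vs "R x * B" k, folded B_def]) (use proj cols Rx B in auto)
    have "mat_adjoint C * R x * B = mat_adjoint C * (B * (mat_adjoint B * (R x * B)))"
      using C Rx B RB by (simp add: assoc_mult_mat[of _ l m _ m _ k])
    also have "\<dots> = (mat_adjoint C * B) * (mat_adjoint B * (R x * B))"
      by (rule assoc_mult_mat[symmetric]) (use C B Rx in auto)
    also have "\<dots> = 0\<^sub>m l k" using CB B Rx by simp
    finally show ?thesis .
  qed
  show ?thesis
    by (rule exI[of _ k], rule exI[of _ B], rule exI[of _ C]) (use k0 km B C BB CC sum1 Z lk in auto)
qed

lemma mult_eq_compression_if_off_block_zero: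
  fixes A B C :: "complex mat"
  assumes B: "B \<in> carrier_mat m k" and C: "C \<in> carrier_mat m l" and A: "A \<in> carrier_mat m m"
    and S: "B * mat_adjoint B + C * mat_adjoint C = 1\<^sub>m m"
    and Z: "mat_adjoint C * A * B = 0\<^sub>m l k"
  shows "A * B = B * (mat_adjoint B * A * B)"
proof -
  have aB: "mat_adjoint B \<in> carrier_mat k m" and aC: "mat_adjoint C \<in> carrier_mat l m" using B C by auto
  have AB: "A * B \<in> carrier_mat m k" using A B by simp
  have "A * B = (B * mat_adjoint B + C * mat_adjoint C) * (A * B)" using S left_mult_one_mat[OF AB] by simp
  also have "\<dots> = B * mat_adjoint B * (A * B) + C * mat_adjoint C * (A * B)"
    using B C aB aC AB by (simp add: add_mult_distrib_mat[of _ m m])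
  also have "B * mat_adjoint B * (A * B) = B * (mat_adjoint B * A * B)"
    using B aB A by (simp add: assoc_mult_mat[of _ m k _ m _ k] assoc_mult_mat[of _ k m _ m _ k])
  also have "C * mat_adjoint C * (A * B) = C * (mat_adjoint C * A * B)"
    using C aC A B by (simp add: assoc_mult_mat[of _ m l _ m _ k] assoc_mult_mat[of _ l m _ m _ k])
  also have "\<dots> = 0\<^sub>m m k" using Z C by simp
  finally show ?thesis using B aB A assoc_mult_mat[OF aB A B] by simp
qed

lemma eq_one_if_fixes_complementary_blocks:
  fixes A B C :: "complex mat"
  assumes A: "A \<in> carrier_mat m m" and B: "B \<in> carrier_mat m k" and C: "C \<in> carrier_mat m l"
    and S: "B * mat_adjoint B + C * mat_adjoint C = 1\<^sub>m m"
    and AB: "A * B = B" and AC: "A * C = C"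
  shows "A = 1\<^sub>m m"
proof -
  have aB: "mat_adjoint B \<in> carrier_mat k m" and aC: "mat_adjoint C \<in> carrier_mat l m" using B C by auto
  have "A = A * (B * mat_adjoint B + C * mat_adjoint C)" using A S by simp
  also have "\<dots> = A * (B * mat_adjoint B) + A * (C * mat_adjoint C)"
    by (rule mult_add_distrib_mat[OF A]) (use B C aB aC in auto)
  also have "\<dots> = A * B * mat_adjoint B + A * C * mat_adjoint C"
    using assoc_mult_mat[OF A B aB] assoc_mult_mat[OF A C aC] by simp
  also have "\<dots> = 1\<^sub>m m" using AB AC S by simp
  finally show ?thesis .
qed

context group
begin

lemma unitary_rep_off_block_zero_swap:
  assumes R: "unitary_rep G m R" and B: "B \<in> carrier_mat m k" and C: "C \<in> carrier_mat m l"
    and Z: "\<And>x. x \<in> carrier G \<Longrightarrow> mat_adjoint C * R x * B = 0\<^sub>m l k" and x: "x \<in> carrier G"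
  shows "mat_adjoint B * R x * C = 0\<^sub>m k l"
proof -
  have rep: "is_rep G m R" using R by (simp add: unitary_rep_def)
  have ix: "inv x \<in> carrier G" using x by simp
  have Ri: "R (inv x) \<in> carrier_mat m m" and Rx: "R x \<in> carrier_mat m m"
    using rep x ix by (auto intro: rep_carrier)
  have aB: "mat_adjoint B \<in> carrier_mat k m" and aC: "mat_adjoint C \<in> carrier_mat l m" using B C by auto
  have "mat_adjoint (mat_adjoint C * R (inv x) * B) = mat_adjoint B * mat_adjoint (mat_adjoint C * R (inv x))"
    by (rule mat_adjoint_mult) (use Ri B in simp)
  also have "mat_adjoint (mat_adjoint C * R (inv x)) = mat_adjoint (R (inv x)) * C"
    using mat_adjoint_mult[of "mat_adjoint C" "R (inv x)"] C Ri by simp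
  also have "mat_adjoint (R (inv x)) = R x" using unitary_rep_adjoint[OF R ix] x by simp
  also have "mat_adjoint B * (R x * C) = mat_adjoint B * R x * C"
    by (rule assoc_mult_mat[OF aB Rx C, symmetric])
  finally have "mat_adjoint B * R x * C = mat_adjoint (mat_adjoint C * R (inv x) * B)" by simp
  also have "\<dots> = 0\<^sub>m k l" using Z[OF ix] by simp
  finally show ?thesis .
qed

lemma unitary_rep_compression:
  assumes R: "unitary_rep G m R" and B: "B \<in> carrier_mat m k" and C: "C \<in> carrier_mat m l"
    and BB: "mat_adjoint B * B = 1\<^sub>m k" and S: "B * mat_adjoint B + C * mat_adjoint C = 1\<^sub>m m"
    and Z: "\<And>x. x \<in> carrier G \<Longrightarrow> mat_adjoint C * R x * B = 0\<^sub>m l k" and k: "0 < k"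
  shows "unitary_rep G k (\<lambda>x. mat_adjoint B * R x * B)"
proof -
  have rep: "is_rep G m R" using R by (simp add: unitary_rep_def)
  have Rc: "\<And>x. x \<in> carrier G \<Longrightarrow> R x \<in> carrier_mat m m" using rep by (simp add: rep_carrier)
  have aB: "mat_adjoint B \<in> carrier_mat k m" using B by simp
  define \<rho> where "\<rho> x = mat_adjoint B * R x * B" for x
  have \<rho>c: "\<rho> x \<in> carrier_mat k k" if x: "x \<in> carrier G" for x
    unfolding \<rho>_def by (rule mult_carrier_mat[OF mult_carrier_mat[OF aB Rc[OF x]] B])
  have inter: "R x * B = B * \<rho> x" if x: "x \<in> carrier G" for x
    unfolding \<rho>_def by (rule mult_eq_compression_if_off_block_zero[OF B C Rc[OF x] S Z[OF x]])
  have mult: "\<rho> (x \<otimes> y) = \<rho> x * \<rho> y" if x: "x \<in> carrier G" and y: "y \<in> carrier G" for x y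
  proof -
    have Rx: "R x \<in> carrier_mat m m" by (rule Rc[OF x])
    have Ry: "R y \<in> carrier_mat m m" by (rule Rc[OF y])
    have aBRx: "mat_adjoint B * R x \<in> carrier_mat k m" using aB Rx by simp
    have "\<rho> (x \<otimes> y) = mat_adjoint B * (R x * R y) * B" by (simp add: \<rho>_def rep_mult[OF rep x y])
    also have "mat_adjoint B * (R x * R y) = (mat_adjoint B * R x) * R y"
      by (rule assoc_mult_mat[OF aB Rx Ry, symmetric])
    also have "(mat_adjoint B * R x) * R y * B = (mat_adjoint B * R x) * (R y * B)"
      by (rule assoc_mult_mat[OF aBRx Ry B])
    also have "R y * B = B * \<rho> y" by (rule inter[OF y])
    also have "(mat_adjoint B * R x) * (B * \<rho> y) = (mat_adjoint B * R x * B) * \<rho> y"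
      by (rule assoc_mult_mat[OF aBRx B \<rho>c[OF y], symmetric])
    finally show ?thesis by (simp add: \<rho>_def)
  qed
  have one: "\<rho> \<one> = 1\<^sub>m k"
    using BB by (simp add: \<rho>_def rep_one[OF rep] right_mult_one_mat[OF aB])
  have adj: "mat_adjoint (\<rho> x) = \<rho> (inv x)" if x: "x \<in> carrier G" for x
  proof -
    have Rx: "R x \<in> carrier_mat m m" by (rule Rc[OF x])
    have "mat_adjoint (\<rho> x) = mat_adjoint B * mat_adjoint (mat_adjoint B * R x)" unfolding \<rho>_def
      by (rule mat_adjoint_mult) (use Rx B in simp)
    also have "mat_adjoint (mat_adjoint B * R x) = mat_adjoint (R x) * B"
      using mat_adjoint_mult[of "mat_adjoint B" "R x"] B Rx by simp
    also have "mat_adjoint (R x) = R (inv x)" by (rule unitary_rep_adjoint[OF R x])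
    also have "mat_adjoint B * (R (inv x) * B) = \<rho> (inv x)"
      unfolding \<rho>_def by (rule assoc_mult_mat[OF aB Rc[OF inv_closed[OF x]] B, symmetric])
    finally show ?thesis .
  qed
  have "unitary k (\<rho> x)" if x: "x \<in> carrier G" for x
    unfolding unitary_def
  proof
    show "\<rho> x \<in> carrier_mat k k" by (rule \<rho>c[OF x])
    have "mat_adjoint (\<rho> x) * \<rho> x = \<rho> (inv x \<otimes> x)" using adj[OF x] mult[OF inv_closed[OF x] x] by simp
    also have "\<dots> = 1\<^sub>m k" using one x by simp
    finally show "mat_adjoint (\<rho> x) * \<rho> x = 1\<^sub>m k" .
  qed
  then show ?thesis
    unfolding unitary_rep_def is_rep_def using k \<rho>c mult one by (simp add: \<rho>_def)
qed

text \<open>Induction on the degree: a reducible unitary representation splits orthogonally into two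
  compressions of smaller degree, and if both were trivial at \<open>g\<close> then so would be \<open>R g\<close>.\<close>
lemma unitary_rep_irreducible_constituent:
  assumes "unitary_rep G m R" "g \<in> carrier G" "R g \<noteq> 1\<^sub>m m"
  shows "\<exists>n \<sigma>. irreducible_rep G n \<sigma> \<and> unitary_rep G n \<sigma> \<and>
           (\<forall>x\<in>carrier G. R x = 1\<^sub>m m \<longrightarrow> \<sigma> x = 1\<^sub>m n) \<and> \<sigma> g \<noteq> 1\<^sub>m n"
  using assms
proof (induction m arbitrary: R rule: less_induct)
  case (less m)
  note R = less.prems(1) and g = less.prems(2) and Rg = less.prems(3)
  have rep: "is_rep G m R" using R by (simp add: unitary_rep_def)
  show ?case
  proof (cases "irreducible_rep G m R")
    case True
    then show ?thesis using R Rg by blast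
  next
    case False
    then obtain W where W: "invariant_subspace G m R W" "W \<noteq> {0\<^sub>v m}" "W \<noteq> carrier_vec m"
      using rep by (auto simp: irreducible_rep_def)
    have Rc: "\<And>x. x \<in> carrier G \<Longrightarrow> R x \<in> carrier_mat m m" using rep by (simp add: rep_carrier)
    obtain k B C where k0: "0 < k" and km: "k < m" and B: "B \<in> carrier_mat m k"
      and C: "C \<in> carrier_mat m (m - k)" and BB: "mat_adjoint B * B = 1\<^sub>m k"
      and CC: "mat_adjoint C * C = 1\<^sub>m (m - k)" and S: "B * mat_adjoint B + C * mat_adjoint C = 1\<^sub>m m"
      and Z: "\<forall>x\<in>carrier G. mat_adjoint C * R x * B = 0\<^sub>m (m - k) k"
      using invariant_subspace_orthogonal_decomposition[OF Rc W] by blast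
    define l where "l = m - k"
    have l0: "0 < l" "l < m" using k0 km by (auto simp: l_def)
    have C': "C \<in> carrier_mat m l" and CC': "mat_adjoint C * C = 1\<^sub>m l"
      using C CC by (simp_all add: l_def)
    have Z1: "\<And>x. x \<in> carrier G \<Longrightarrow> mat_adjoint C * R x * B = 0\<^sub>m l k" using Z by (simp add: l_def)
    have Z2: "\<And>x. x \<in> carrier G \<Longrightarrow> mat_adjoint B * R x * C = 0\<^sub>m k l"
      by (rule unitary_rep_off_block_zero_swap[OF R B C' Z1])
    have S': "C * mat_adjoint C + B * mat_adjoint B = 1\<^sub>m m"
      using S B C' by (metis comm_add_mat mult_carrier_mat carrier_mat_adjoint)
    have u1: "unitary_rep G k (\<lambda>x. mat_adjoint B * R x * B)"
      by (rule unitary_rep_compression[OF R B C' BB S Z1 k0])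
    have u2: "unitary_rep G l (\<lambda>x. mat_adjoint C * R x * C)"
      by (rule unitary_rep_compression[OF R C' B CC' S' Z2 l0(1)])
    have triv1: "mat_adjoint B * R x * B = 1\<^sub>m k" if "R x = 1\<^sub>m m" for x
      using that BB B by simp
    have triv2: "mat_adjoint C * R x * C = 1\<^sub>m l" if "R x = 1\<^sub>m m" for x
      using that CC' C' by simp
    show ?thesis
    proof (cases "mat_adjoint B * R g * B = 1\<^sub>m k")
      case False
      then show ?thesis using less.IH[OF km u1 g] triv1 by blast
    next
      case T1: True
      show ?thesis
      proof (cases "mat_adjoint C * R g * C = 1\<^sub>m l")
        case False
        then show ?thesis using less.IH[OF l0(2) u2 g] triv2 by blast
      next
        case T2: True
        have "R g * B = B"
          using mult_eq_compression_if_off_block_zero[OF B C' Rc[OF g] S Z1[OF g]] T1 B by simp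
        moreover have "R g * C = C"
          using mult_eq_compression_if_off_block_zero[OF C' B Rc[OF g] S' Z2[OF g]] T2 C' by simp
        ultimately have "R g = 1\<^sub>m m"
          by (rule eq_one_if_fixes_complementary_blocks[OF Rc[OF g] B C' S])
        then show ?thesis using Rg by simp
      qed
    qed
  qed
qed

lemma irreducible_rep_separating:
  assumes fin: "finite (carrier G)" and N: "N \<lhd> G" and g: "g \<in> carrier G" "g \<notin> N"
  shows "\<exists>n \<sigma>. irreducible_rep G n \<sigma> \<and> unitary_rep G n \<sigma> \<and> (\<forall>x\<in>N. \<sigma> x = 1\<^sub>m n) \<and> \<sigma> g \<noteq> 1\<^sub>m n"
proof -
  obtain m R where R: "unitary_rep G m R" and ker: "\<forall>x\<in>carrier G. R x = 1\<^sub>m m \<longleftrightarrow> x \<in> N"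
    using exists_unitary_rep_with_kernel[OF fin N] by blast
  have "N \<subseteq> carrier G" using normal_imp_subgroup[OF N] subgroup.subset by blast
  moreover have "R g \<noteq> 1\<^sub>m m" using ker g by auto
  ultimately show ?thesis
    using unitary_rep_irreducible_constituent[OF R g(1)] ker by blast
qed

end

section \<open>Character degrees and centres of characters\<close>

definition rep_center :: "('a, 'b) monoid_scheme \<Rightarrow> nat \<Rightarrow> ('a \<Rightarrow> complex mat) \<Rightarrow> 'a set" where
  "rep_center G n \<rho> = {g \<in> carrier G. \<exists>\<mu>. \<rho> g = \<mu> \<cdot>\<^sub>m 1\<^sub>m n}"

lemma mat_1_mult_comm: "A \<in> carrier_mat 1 1 \<Longrightarrow> B \<in> carrier_mat 1 1 \<Longrightarrow> A * B = B * (A :: complex mat)"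
  by (rule eq_matI) (auto simp: scalar_prod_def)

lemma character_in_Irr: "irreducible_rep G n \<rho> \<Longrightarrow> character G \<rho> \<in> Irr G"
  unfolding Irr_def by blast

context group
begin

lemma character_one: "is_rep G n \<rho> \<Longrightarrow> character G \<rho> \<one> = of_nat n"
  by (simp add: character_def rep_one)

lemma degree_in_cd:
  assumes "irreducible_rep G n \<rho>"
  shows "of_nat n \<in> cd G"
proof -
  have "character G \<rho> \<one> = of_nat n"
    using assms by (simp add: character_one irreducible_rep_def)
  then show ?thesis
    using character_in_Irr[OF assms] unfolding cd_def by (auto intro!: exI[of _ "character G \<rho>"])
qed

lemma irreducible_rep_trivial: "irreducible_rep G 1 (\<lambda>_. 1\<^sub>m 1)"
  unfolding irreducible_rep_def
proof (intro conjI allI impI)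
  show "is_rep G 1 (\<lambda>_. 1\<^sub>m 1)" by (simp add: is_rep_def)
  fix W assume W: "invariant_subspace G 1 (\<lambda>_. 1\<^sub>m 1) W"
  show "W = {0\<^sub>v 1} \<or> W = carrier_vec 1"
  proof (cases "W = {0\<^sub>v 1}")
    case False
    have Wc: "W \<subseteq> carrier_vec 1" and W0: "0\<^sub>v 1 \<in> W" and Ws: "\<forall>c. \<forall>v\<in>W. c \<cdot>\<^sub>v v \<in> W"
      using W by (auto simp: invariant_subspace_def)
    obtain v where v: "v \<in> W" "v \<noteq> 0\<^sub>v 1" using False W0 by auto
    have vc: "v \<in> carrier_vec 1" using v Wc by auto
    have v0: "v $ 0 \<noteq> 0"
    proof
      assume "v $ 0 = 0"
      then have "v = 0\<^sub>v 1" using vc by (intro eq_vecI) auto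
      then show False using v by simp
    qed
    have "u \<in> W" if u: "u \<in> carrier_vec 1" for u
    proof -
      have "u = (u $ 0 / v $ 0) \<cdot>\<^sub>v v" using u vc v0 by (intro eq_vecI) auto
      then show ?thesis using Ws v by metis
    qed
    then show ?thesis using Wc by auto
  qed simp
qed

lemma degrees_eq_if_card_cd_2:
  assumes cd2: "card (cd G) = 2" and r1: "irreducible_rep G n \<rho>" and r2: "irreducible_rep G n' \<rho>'"
    and "n \<noteq> 1" and "n' \<noteq> 1"
  shows "n = n'"
proof (rule ccontr)
  assume "n \<noteq> n'"
  then have "card {1 :: complex, of_nat n, of_nat n'} = 3"
    using \<open>n \<noteq> 1\<close> \<open>n' \<noteq> 1\<close> by (simp add: of_nat_eq_1_iff)
  moreover have "{1, of_nat n, of_nat n'} \<subseteq> cd G"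
    using degree_in_cd[OF r1] degree_in_cd[OF r2] degree_in_cd[OF irreducible_rep_trivial] by simp
  then have "card {1 :: complex, of_nat n, of_nat n'} \<le> card (cd G)"
    using cd2 by (intro card_mono) (auto intro: card_ge_0_finite)
  ultimately show False using cd2 by simp
qed

lemma char_center_character:
  assumes U: "unitary_rep G n \<rho>"
  shows "char_center G (character G \<rho>) = rep_center G n \<rho>"
proof -
  have rep: "is_rep G n \<rho>" and n: "0 < n" using U by (auto simp: unitary_rep_def is_rep_def)
  have "g \<in> char_center G (character G \<rho>) \<longleftrightarrow> g \<in> rep_center G n \<rho>" if g: "g \<in> carrier G" for g
  proof -
    have "g \<in> char_center G (character G \<rho>) \<longleftrightarrow>
        complex_of_real (cmod (mat_trace (\<rho> g))) = complex_of_real (real n)"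
      using g character_one[OF rep] by (simp add: char_center_def character_def)
    also have "\<dots> \<longleftrightarrow> cmod (mat_trace (\<rho> g)) = real n" by (rule of_real_eq_iff)
    also have "\<dots> \<longleftrightarrow> (\<exists>\<mu>. \<rho> g = \<mu> \<cdot>\<^sub>m 1\<^sub>m n)"
      using unitary_scalar_iff_trace_norm[OF _ n] U g by (simp add: unitary_rep_def)
    finally show ?thesis using g by (simp add: rep_center_def)
  qed
  then show ?thesis by (auto simp: char_center_def rep_center_def)
qed

lemma GVZ_trace_eq_0:
  assumes gvz: "GVZ_group G" and irr: "irreducible_rep G n \<rho>" and U: "unitary_rep G n \<rho>"
    and g: "g \<in> carrier G" "g \<notin> rep_center G n \<rho>"
  shows "mat_trace (\<rho> g) = 0"
  using gvz character_in_Irr[OF irr] char_center_character[OF U] g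
  by (auto simp: GVZ_group_def character_def)

lemma rep_center_normal:
  assumes U: "unitary_rep G n \<rho>"
  shows "rep_center G n \<rho> \<lhd> G"
proof -
  have rep: "is_rep G n \<rho>" using U by (simp add: unitary_rep_def)
  have sub: "subgroup (rep_center G n \<rho>) G"
  proof (rule subgroupI)
    show "rep_center G n \<rho> \<subseteq> carrier G" by (auto simp: rep_center_def)
    have "\<one> \<in> rep_center G n \<rho>" using rep_one[OF rep] by (auto simp: rep_center_def intro!: exI[of _ 1])
    then show "rep_center G n \<rho> \<noteq> {}" by auto
  next
    fix a assume "a \<in> rep_center G n \<rho>"
    then obtain \<mu> where a: "a \<in> carrier G" and \<mu>: "\<rho> a = \<mu> \<cdot>\<^sub>m 1\<^sub>m n" by (auto simp: rep_center_def)
    have "\<rho> (inv a) = cnj \<mu> \<cdot>\<^sub>m 1\<^sub>m n" using unitary_rep_adjoint[OF U a] \<mu> by simp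
    then show "inv a \<in> rep_center G n \<rho>" using a by (auto simp: rep_center_def)
  next
    fix a b assume "a \<in> rep_center G n \<rho>" "b \<in> rep_center G n \<rho>"
    then obtain \<mu> \<nu> where a: "a \<in> carrier G" and b: "b \<in> carrier G"
      and \<mu>: "\<rho> a = \<mu> \<cdot>\<^sub>m 1\<^sub>m n" and \<nu>: "\<rho> b = \<nu> \<cdot>\<^sub>m 1\<^sub>m n" by (auto simp: rep_center_def)
    have "\<rho> (a \<otimes> b) = (\<mu> \<cdot>\<^sub>m 1\<^sub>m n) * (\<nu> \<cdot>\<^sub>m 1\<^sub>m n)" using rep_mult[OF rep a b] \<mu> \<nu> by simp
    also have "\<dots> = \<mu> \<cdot>\<^sub>m (1\<^sub>m n * (\<nu> \<cdot>\<^sub>m 1\<^sub>m n))"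
      by (rule mult_smult_assoc_mat[OF one_carrier_mat smult_carrier_mat[OF one_carrier_mat]])
    also have "\<dots> = \<mu> \<cdot>\<^sub>m (\<nu> \<cdot>\<^sub>m 1\<^sub>m n)"
      by (simp add: left_mult_one_mat[OF smult_carrier_mat[OF one_carrier_mat]])
    also have "\<dots> = (\<mu> * \<nu>) \<cdot>\<^sub>m 1\<^sub>m n" by (rule eq_matI) auto
    finally have "\<rho> (a \<otimes> b) = (\<mu> * \<nu>) \<cdot>\<^sub>m 1\<^sub>m n" .
    then show "a \<otimes> b \<in> rep_center G n \<rho>" using a b by (auto simp: rep_center_def)
  qed
  have "x \<otimes> h \<otimes> inv x \<in> rep_center G n \<rho>" if x: "x \<in> carrier G" and "h \<in> rep_center G n \<rho>" for x h
  proof -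
    obtain \<mu> where h: "h \<in> carrier G" and \<mu>: "\<rho> h = \<mu> \<cdot>\<^sub>m 1\<^sub>m n"
      using \<open>h \<in> rep_center G n \<rho>\<close> by (auto simp: rep_center_def)
    have \<rho>x: "\<rho> x \<in> carrier_mat n n" and \<rho>ix: "\<rho> (inv x) \<in> carrier_mat n n"
      using rep x by (auto intro: rep_carrier)
    have "\<rho> (x \<otimes> h \<otimes> inv x) = \<rho> x * (\<mu> \<cdot>\<^sub>m 1\<^sub>m n) * \<rho> (inv x)"
      using rep_mult[OF rep] x h \<mu> by simp
    also have "\<rho> x * (\<mu> \<cdot>\<^sub>m 1\<^sub>m n) = \<mu> \<cdot>\<^sub>m \<rho> x"
      using mult_smult_distrib[OF \<rho>x one_carrier_mat] right_mult_one_mat[OF \<rho>x] by simp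
    also have "(\<mu> \<cdot>\<^sub>m \<rho> x) * \<rho> (inv x) = \<mu> \<cdot>\<^sub>m (\<rho> x * \<rho> (inv x))"
      by (rule mult_smult_assoc_mat[OF \<rho>x \<rho>ix])
    also have "\<rho> x * \<rho> (inv x) = 1\<^sub>m n" by (rule rep_inv_right[OF rep x])
    finally show ?thesis using x h by (auto simp: rep_center_def)
  qed
  then show ?thesis using sub by (simp add: normal_inv_iff)
qed

lemma GVZ_card_carrier:
  assumes fin: "finite (carrier G)" and gvz: "GVZ_group G"
    and irr: "irreducible_rep G n \<rho>" and U: "unitary_rep G n \<rho>"
  shows "card (carrier G) = n * n * card (rep_center G n \<rho>)"
proof -
  have n: "0 < n" using U by (simp add: unitary_rep_def is_rep_def)
  have "of_nat (card (carrier G)) = (\<Sum>g\<in>carrier G. mat_trace (\<rho> g) * mat_trace (\<rho> (inv g)))"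
    using irreducible_character_norm[OF irr] by simp
  also have "\<dots> = (\<Sum>g\<in>carrier G. if g \<in> rep_center G n \<rho> then of_nat (n * n) else (0::complex))"
  proof (rule sum.cong)
    fix g assume g: "g \<in> carrier G"
    have "mat_trace (\<rho> g) * mat_trace (\<rho> (inv g)) = complex_of_real ((cmod (mat_trace (\<rho> g)))\<^sup>2)"
      using unitary_rep_trace_inv[OF U g] complex_norm_square[of "mat_trace (\<rho> g)"] by simp
    moreover have "g \<in> rep_center G n \<rho> \<longleftrightarrow> cmod (mat_trace (\<rho> g)) = real n"
      using unitary_scalar_iff_trace_norm[OF _ n] U g by (simp add: unitary_rep_def rep_center_def)
    ultimately show "mat_trace (\<rho> g) * mat_trace (\<rho> (inv g))
        = (if g \<in> rep_center G n \<rho> then of_nat (n * n) else 0)"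
      using GVZ_trace_eq_0[OF gvz irr U g] by (simp add: power2_eq_square)
  qed simp
  also have "\<dots> = of_nat (n * n * card (rep_center G n \<rho>))"
  proof -
    have "carrier G \<inter> rep_center G n \<rho> = rep_center G n \<rho>" by (auto simp: rep_center_def)
    then show ?thesis using fin by (simp add: sum.If_cases)
  qed
  finally show ?thesis by (simp only: of_nat_eq_iff)
qed

end

context group
begin

lemma commutator_mem_rep_center:
  assumes fin: "finite (carrier G)" and gvz: "GVZ_group G" and cd2: "card (cd G) = 2"
    and irr: "irreducible_rep G n \<rho>" and U: "unitary_rep G n \<rho>" and n1: "n \<noteq> 1"
    and a: "a \<in> carrier G" and b: "b \<in> carrier G"
  shows "a \<otimes> b \<otimes> inv (b \<otimes> a) \<in> rep_center G n \<rho>"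
proof (rule ccontr)
  define c where "c = a \<otimes> b \<otimes> inv (b \<otimes> a)"
  define Z where "Z = rep_center G n \<rho>"
  have c_carrier: "c \<in> carrier G" using a b by (simp add: c_def)
  assume "a \<otimes> b \<otimes> inv (b \<otimes> a) \<notin> rep_center G n \<rho>"
  then have "c \<notin> Z" by (simp add: c_def Z_def)
  then obtain n' \<sigma> where irr': "irreducible_rep G n' \<sigma>" and U': "unitary_rep G n' \<sigma>"
    and triv: "\<forall>x\<in>Z. \<sigma> x = 1\<^sub>m n'" and \<sigma>c: "\<sigma> c \<noteq> 1\<^sub>m n'"
    using irreducible_rep_separating[OF fin rep_center_normal[OF U] c_carrier] by (auto simp: Z_def)
  have rep': "is_rep G n' \<sigma>" using irr' by (simp add: irreducible_rep_def)
  have "n' \<noteq> 1"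
  proof
    assume "n' = 1"
    then have "\<sigma> a * \<sigma> b = \<sigma> b * \<sigma> a"
      using rep' a b by (intro mat_1_mult_comm) (auto intro: rep_carrier)
    then show False using rep_commutator_eq_one[OF rep' a b] \<sigma>c by (simp add: c_def)
  qed
  then have n'n: "n' = n" using degrees_eq_if_card_cd_2[OF cd2 irr irr' n1] by simp
  define Z' where "Z' = rep_center G n \<sigma>"
  have "Z \<subseteq> Z'"
  proof
    fix x assume x: "x \<in> Z"
    then have "\<sigma> x = 1 \<cdot>\<^sub>m 1\<^sub>m n" using triv n'n by (auto intro!: eq_matI)
    then show "x \<in> Z'" using x by (auto simp: Z'_def Z_def rep_center_def)
  qed
  moreover have "finite Z'" using fin by (auto simp: Z'_def rep_center_def)
  moreover have "n * n * card Z = n * n * card Z'"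
    using GVZ_card_carrier[OF fin gvz irr U] GVZ_card_carrier[OF fin gvz irr' U'] n'n
    unfolding Z_def Z'_def by metis
  then have "card Z = card Z'" using n1 irr by (simp add: irreducible_rep_def is_rep_def)
  ultimately have ZZ': "Z = Z'" by (intro card_subset_eq)
  have "(\<Sum>g\<in>carrier G. mat_trace (\<sigma> g)) = (\<Sum>g\<in>carrier G. if g \<in> Z then of_nat n else (0::complex))"
  proof (rule sum.cong)
    fix g assume g: "g \<in> carrier G"
    show "mat_trace (\<sigma> g) = (if g \<in> Z then of_nat n else 0)"
      using triv n'n GVZ_trace_eq_0[OF gvz irr' U' g] ZZ' by (simp add: Z'_def)
  qed simp
  also have "\<dots> = of_nat n * of_nat (card Z)"
  proof -
    have "carrier G \<inter> Z = Z" by (auto simp: Z_def rep_center_def)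
    then show ?thesis using fin by (simp add: sum.If_cases)
  qed
  also have "\<dots> \<noteq> 0"
  proof -
    have "\<one> \<in> Z" using rep_center_normal[OF U] normal_imp_subgroup subgroup.one_closed
      unfolding Z_def by blast
    moreover have "finite Z" using fin by (auto simp: Z_def rep_center_def)
    ultimately have "card Z \<noteq> 0" by auto
    then show ?thesis using irr by (simp add: irreducible_rep_def is_rep_def)
  qed
  finally have "\<sigma> c = 1\<^sub>m n'"
    using irreducible_rep_eq_one_if_trace_sum_nonzero[OF irr' _ c_carrier] by blast
  with \<sigma>c show False ..
qed

lemma subgroup_group_center: "subgroup (group_center G) G"
proof (rule subgroupI)
  show "group_center G \<subseteq> carrier G" by (auto simp: group_center_def)
  show "group_center G \<noteq> {}" using one_closed by (auto simp: group_center_def)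
next
  fix a assume "a \<in> group_center G"
  then have a: "a \<in> carrier G" and comm: "\<And>g. g \<in> carrier G \<Longrightarrow> a \<otimes> g = g \<otimes> a"
    by (auto simp: group_center_def)
  have "inv a \<otimes> g = g \<otimes> inv a" if g: "g \<in> carrier G" for g
  proof -
    have "inv a \<otimes> g = inv a \<otimes> (g \<otimes> a) \<otimes> inv a" using a g by (simp add: m_assoc)
    also have "\<dots> = inv a \<otimes> (a \<otimes> g) \<otimes> inv a" by (simp only: comm[OF g])
    also have "\<dots> = g \<otimes> inv a" using a g by (simp add: m_assoc[symmetric])
    finally show ?thesis .
  qed
  then show "inv a \<in> group_center G" using a by (simp add: group_center_def)
next
  fix a b assume "a \<in> group_center G" "b \<in> group_center G"
  then have a: "a \<in> carrier G" and b: "b \<in> carrier G"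
    and ca: "\<And>g. g \<in> carrier G \<Longrightarrow> a \<otimes> g = g \<otimes> a" and cb: "\<And>g. g \<in> carrier G \<Longrightarrow> b \<otimes> g = g \<otimes> b"
    by (auto simp: group_center_def)
  have "a \<otimes> b \<otimes> g = g \<otimes> (a \<otimes> b)" if g: "g \<in> carrier G" for g
  proof -
    have "a \<otimes> b \<otimes> g = a \<otimes> (g \<otimes> b)" using a b g by (simp add: m_assoc cb)
    also have "\<dots> = (g \<otimes> a) \<otimes> b" using a b g by (simp add: m_assoc[symmetric] ca)
    also have "\<dots> = g \<otimes> (a \<otimes> b)" using g a b by (rule m_assoc)
    finally show ?thesis .
  qed
  then show "a \<otimes> b \<in> group_center G" using a b by (simp add: group_center_def)
qed

lemma derived_subset_group_center:
  assumes fin: "finite (carrier G)" and gvz: "GVZ_group G" and cd2: "card (cd G) = 2"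
  shows "derived G (carrier G) \<subseteq> group_center G"
proof -
  have "c \<in> group_center G" if "c \<in> derived_set G (carrier G)" for c
  proof -
    obtain h1 h2 where h: "h1 \<in> carrier G" "h2 \<in> carrier G"
      and "c = h1 \<otimes> h2 \<otimes> inv h1 \<otimes> inv h2" using \<open>c \<in> derived_set G (carrier G)\<close> by blast
    then have c_eq: "c = h1 \<otimes> h2 \<otimes> inv (h2 \<otimes> h1)" by (simp add: inv_mult_group m_assoc)
    have c: "c \<in> carrier G" using h c_eq by simp
    have "c \<otimes> z = z \<otimes> c" if z: "z \<in> carrier G" for z
    proof (rule ccontr)
      assume ne: "c \<otimes> z \<noteq> z \<otimes> c"
      define w where "w = c \<otimes> z \<otimes> inv (z \<otimes> c)"
      have w: "w \<in> carrier G" using c z by (simp add: w_def)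
      have "w \<notin> {\<one>}"
      proof
        assume "w \<in> {\<one>}"
        have "c \<otimes> z = w \<otimes> (z \<otimes> c)" using c z by (simp add: w_def m_assoc)
        also have "\<dots> = z \<otimes> c" using \<open>w \<in> {\<one>}\<close> c z by simp
        finally show False using ne by simp
      qed
      then obtain n \<sigma> where irr: "irreducible_rep G n \<sigma>" and U: "unitary_rep G n \<sigma>"
        and \<sigma>w: "\<sigma> w \<noteq> 1\<^sub>m n"
        using irreducible_rep_separating[OF fin one_is_normal w] by blast
      have rep: "is_rep G n \<sigma>" using irr by (simp add: irreducible_rep_def)
      have "\<sigma> c * \<sigma> z = \<sigma> z * \<sigma> c"
      proof (cases "n = 1")
        case True
        then show ?thesis using rep c z by (intro mat_1_mult_comm) (auto intro: rep_carrier)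
      next
        case False
        then obtain \<mu> where \<mu>: "\<sigma> c = \<mu> \<cdot>\<^sub>m 1\<^sub>m n"
          using commutator_mem_rep_center[OF fin gvz cd2 irr U False h] c_eq
          by (auto simp: rep_center_def)
        have \<sigma>z: "\<sigma> z \<in> carrier_mat n n" using rep z by (rule rep_carrier)
        have "(\<mu> \<cdot>\<^sub>m 1\<^sub>m n) * \<sigma> z = \<mu> \<cdot>\<^sub>m \<sigma> z"
          using mult_smult_assoc_mat[OF one_carrier_mat \<sigma>z] left_mult_one_mat[OF \<sigma>z] by simp
        moreover have "\<sigma> z * (\<mu> \<cdot>\<^sub>m 1\<^sub>m n) = \<mu> \<cdot>\<^sub>m \<sigma> z"
          using mult_smult_distrib[OF \<sigma>z one_carrier_mat] right_mult_one_mat[OF \<sigma>z] by simp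
        ultimately show ?thesis by (simp add: \<mu>)
      qed
      then show False using rep_commutator_eq_one[OF rep c z] \<sigma>w by (simp add: w_def)
    qed
    then show ?thesis using c by (simp add: group_center_def)
  qed
  then have "derived_set G (carrier G) \<subseteq> group_center G" by blast
  then show ?thesis unfolding derived_def by (rule generate_subgroup_incl[OF _ subgroup_group_center])
qed

end

theorem mainTheorem5:
  fixes G :: "('a, 'b) monoid_scheme"
  assumes "group G" and "finite (carrier G)"
    and "GVZ_group G"
    and "card (cd G) = 2"
  shows "nilpotency_class_2 G"
  using group.derived_subset_group_center[OF assms] \<open>GVZ_group G\<close>
  unfolding nilpotency_class_2_def GVZ_group_def by blast

end
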